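(* Consider $\min f(x)$ s.t. $g(x)\in K$ with $f,g$ twice continuously differentiable, $K\subseteq\mathbb{R}^m$ closed, $C:=g^{-1}(K)$. Let $d\in T_C(\bar x)$, let $\bar x$ be a local optimal solution in direction $d$, suppose $\nabla f(\bar x)d=0$ and MSCQ holds at $\bar x$ in direction $d$ for $g(x)\in K$. Then: (a) there exists $\lambda\in\Lambda(\bar x;d)$ with $\sigma_\Theta(\lambda)\le0$ and $\lambda\in N_{T_K^{''}(g(\bar x);\nabla g(\bar x)d)}(0)$; (b) if $T_K^2(g(\bar x);\nabla g(\bar x)d)\neq\emptyset$, there exists $\lambda\in\Lambda(\bar x;d)$ with $\nabla^2_{xx}L(\bar x,\lambda)(d,d)-\sigma_\Omega(\lambda)\ge0$, and moreover there exist sequences $w_k\in T_C^2(\bar x;d)$ and $\lambda_k\in N_{T_K^2(g(\bar x);\nabla g(\bar x)d)}\big(\nabla g(\bar x)w_k+\nabla^2g(\bar x)(d,d)\big)$ such that $\nabla f(\bar x)w_k+\nabla^2f(\bar x)(d,d)\to\alpha$, $\langle\nabla g(\bar x)^T\lambda_k+\nabla f(\bar x),w_k\rangle\to0$, and $\lambda_k\to\lambda$, where $\alpha:=\inf_{w\in T_C^2(\bar x;d)}(\nabla f(\bar x)w+\nabla^2f(\bar x)(d,d))$.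
   Context: $L(x,\lambda):=f(x)+\langle\lambda,g(x)\rangle$. The M-multiplier set in direction $d$ is $\Lambda(\bar x;d):=\{\lambda\in\mathbb{R}^m\mid \lambda\in N_K(g(\bar x);\nabla g(\bar x)d),\ \nabla_xL(\bar x,\lambda)=0\}$, where $N_K(\bar y;v):=\limsup_{t\downarrow0,v'\to v}\hat N_K(\bar y+tv')$ is the directional limiting normal cone; $N_A(\cdot)$ is the limiting normal cone. $\Theta:=\nabla g(\bar x)(T_C^{''}(\bar x;d))$, $\Omega:=\nabla g(\bar x)(T_C^2(\bar x;d))+\nabla^2g(\bar x)(d,d)$, $\nabla^2g(\bar x)(d,d):=(d^T\nabla^2g_i(\bar x)d)_i$. $T_S^2(\bar y;v):=\{w\mid \exists t_k\downarrow 0,\ w_k\to w,\ \bar y+t_kv+\tfrac12 t_k^2w_k\in S\}$; $T_S^{''}(\bar y;v):=\{w\mid \exists (t_k,r_k)\downarrow(0,0),\ w_k\to w,\ t_k/r_k\to0,\ \bar y+t_kv+\tfrac12 t_kr_kw_k\in S\}$. $\sigma_S(\lambda):=\sup_{u\in S}\langle\lambda,u\rangle$. $V_{\rho,\delta}(d):=\{w\in\delta B\mid \|\,\|d\|w-\|w\|d\,\|\le\rho\|w\|\|d\|\}$; local optimality in direction $d$: $f(x)\ge f(\bar x)$ on $C\cap(\bar x+V_{\rho,\delta}(d))$ for some $\rho,\delta>0$. MSCQ at $\bar x$ in direction $d$: $\mathrm{dist}(x,g^{-1}(K))\le\kappa\,\mathrm{dist}(g(x),K)$ for all $x\in\bar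 x+V_{\rho,\delta}(d)$, for some $\rho,\delta,\kappa>0$. *)

theory Defs
  imports "HOL-Analysis.Analysis"
begin

definition tangent_cone :: "'a::real_normed_vector set \<Rightarrow> 'a \<Rightarrow> 'a set" where
  "tangent_cone S x = {d. \<exists>t dd. (\<forall>k. t k > 0) \<and> t \<longlonglongrightarrow> 0 \<and> dd \<longlonglongrightarrow> d
      \<and> (\<forall>k. x + t k *\<^sub>R dd k \<in> S)}"

definition second_order_tangent_set :: "'a::real_normed_vector set \<Rightarrow> 'a \<Rightarrow> 'a \<Rightarrow> 'a set" where
  "second_order_tangent_set S y v = {w. \<exists>t ww. (\<forall>k. t k > 0) \<and> t \<longlonglongrightarrow> 0 \<and> ww \<longlonglongrightarrow> w
      \<and> (\<forall>k. y + t k *\<^sub>R v + ((1/2) * (t k)\<^sup>2) *\<^sub>R ww k \<in> S)}"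

definition asymptotic_second_order_tangent_cone :: "'a::real_normed_vector set \<Rightarrow> 'a \<Rightarrow> 'a \<Rightarrow> 'a set" where
  "asymptotic_second_order_tangent_cone S y v = {w. \<exists>t r ww. (\<forall>k. t k > 0 \<and> r k > 0)
      \<and> t \<longlonglongrightarrow> 0 \<and> r \<longlonglongrightarrow> 0 \<and> (\<lambda>k. t k / r k) \<longlonglongrightarrow> 0 \<and> ww \<longlonglongrightarrow> w
      \<and> (\<forall>k. y + t k *\<^sub>R v + ((1/2) * t k * r k) *\<^sub>R ww k \<in> S)}"

definition regular_normal_cone :: "'a::real_inner set \<Rightarrow> 'a \<Rightarrow> 'a set" where
  "regular_normal_cone A y = {l. y \<in> A \<and> (\<forall>\<epsilon>>0. \<exists>\<delta>>0. \<forall>y'\<in>A. norm (y' - y) < \<delta> \<longrightarrow>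
      l \<bullet> (y' - y) \<le> \<epsilon> * norm (y' - y))}"

definition limiting_normal_cone :: "'a::real_inner set \<Rightarrow> 'a \<Rightarrow> 'a set" where
  "limiting_normal_cone A y = {l. \<exists>ys ls. ys \<longlonglongrightarrow> y \<and> ls \<longlonglongrightarrow> l
      \<and> (\<forall>k. ys k \<in> A \<and> ls k \<in> regular_normal_cone A (ys k))}"

definition directional_normal_cone :: "'a::real_inner set \<Rightarrow> 'a \<Rightarrow> 'a \<Rightarrow> 'a set" where
  "directional_normal_cone A y v = {l. \<exists>t vs ls. (\<forall>k. t k > 0) \<and> t \<longlonglongrightarrow> 0 \<and> vs \<longlonglongrightarrow> v
      \<and> ls \<longlonglongrightarrow> l \<and> (\<forall>k. ls k \<in> regular_normal_cone A (y + t k *\<^sub>R vs k))}"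

definition support_fun :: "'a::real_inner set \<Rightarrow> 'a \<Rightarrow> ereal" where
  "support_fun S l = (SUP u\<in>S. ereal (l \<bullet> u))"

definition dir_nbhd :: "real \<Rightarrow> real \<Rightarrow> 'a::real_normed_vector \<Rightarrow> 'a set" where
  "dir_nbhd \<rho> \<delta> d = {w \<in> cball 0 \<delta>. norm (norm d *\<^sub>R w - norm w *\<^sub>R d) \<le> \<rho> * norm w * norm d}"

definition local_opt_dir :: "('a::real_normed_vector \<Rightarrow> real) \<Rightarrow> 'a set \<Rightarrow> 'a \<Rightarrow> 'a \<Rightarrow> bool" where
  "local_opt_dir f C xbar d \<longleftrightarrow> xbar \<in> C \<and> (\<exists>\<rho>>0. \<exists>\<delta>>0. \<forall>w\<in>dir_nbhd \<rho> \<delta> d.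
      xbar + w \<in> C \<longrightarrow> f xbar \<le> f (xbar + w))"

definition MSCQ_dir :: "('a::real_normed_vector \<Rightarrow> 'b::real_normed_vector) \<Rightarrow> 'b set \<Rightarrow> 'a \<Rightarrow> 'a \<Rightarrow> bool" where
  "MSCQ_dir g K xbar d \<longleftrightarrow> (\<exists>\<rho>>0. \<exists>\<delta>>0. \<exists>\<kappa>>0. \<forall>w\<in>dir_nbhd \<rho> \<delta> d.
      infdist (xbar + w) (g -` K) \<le> \<kappa> * infdist (g (xbar + w)) K)"

text \<open>M-multiplier set Lambda(xbar;d), given Df = nabla f(xbar), Dg = nabla g(xbar), y = g(xbar).\<close>
definition M_multipliers :: "('a \<Rightarrow> real) \<Rightarrow> ('a \<Rightarrow> 'b::real_inner) \<Rightarrow> 'b set \<Rightarrow> 'b \<Rightarrow> 'a \<Rightarrow> 'b set" where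
  "M_multipliers Df Dg K y d = {l. l \<in> directional_normal_cone K y (Dg d) \<and> (\<forall>v. Df v + l \<bullet> Dg v = 0)}"

end

theory Submission
  imports Defs
begin

text \<open>
  Both parts are proved on a linearized problem. For \<open>c \<ge> 0\<close> let \<open>W\<close> and \<open>T\<close> be the
  second-order tangent vectors of \<open>g\<inverse>(K)\<close> at \<open>x\<close> and of \<open>K\<close> at \<open>g(x)\<close> along sequences with
  \<open>t/r \<rightarrow> c\<close>, so that \<open>c = 1\<close> gives the outer second-order tangent sets and \<open>c = 0\<close> the
  asymptotic cones. Taylor expansion shows that \<open>w \<mapsto> \<nabla>g(x)w + c \<nabla>\<^sup>2g(x)(d,d)\<close> maps \<open>W\<close>
  into \<open>T\<close>, directional MSCQ makes this inclusion metrically subregular, and directional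
  optimality gives \<open>\<nabla>f(x)w + c \<nabla>\<^sup>2f(x)(d,d) \<ge> 0\<close> on \<open>W\<close>.

  On the linearized problem a penalty argument produces multipliers. Minimize the objective
  plus a proximal term plus a large quadratic penalty of the residual
  \<open>\<nabla>g(x)w + c \<nabla>\<^sup>2g(x)(d,d) - z\<close> over pairs \<open>(w, z)\<close> with \<open>z \<in> T\<close> near the proximal point. By
  subregularity the minimizer stays close to the proximal point; its scaled residual is a
  proximal, hence regular, normal to \<open>T\<close> and nearly annihilates the gradient. Limits of these are limiting
  normals to \<open>T\<close>, and every regular normal to a second-order tangent set of \<open>K\<close> is a
  directional normal to \<open>K\<close> in direction \<open>\<nabla>g(x)d\<close>; so the limits are M-multipliers. For
  \<open>c = 0\<close> the point \<open>0\<close> is already optimal, which gives (a); for \<open>c = 1\<close> the argument is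
  run along a minimizing sequence of the linearized problem, which gives (b).
\<close>

text \<open>\<open>second_order_tangent c S y v\<close> unifies the two second-order tangent notions via the limit
  \<open>c\<close> of \<open>t/r\<close>; see the two lemmas below.\<close>
definition second_order_tangent :: "real \<Rightarrow> 'a::real_normed_vector set \<Rightarrow> 'a \<Rightarrow> 'a \<Rightarrow> 'a set" where
  "second_order_tangent c S y v = {w. \<exists>t r ww. (\<forall>k. t k > 0 \<and> r k > 0) \<and> t \<longlonglongrightarrow> 0 \<and> r \<longlonglongrightarrow> 0
      \<and> (\<lambda>k. t k / r k) \<longlonglongrightarrow> c \<and> ww \<longlonglongrightarrow> w
      \<and> (\<forall>k. y + t k *\<^sub>R v + ((1/2) * t k * r k) *\<^sub>R ww k \<in> S)}"

lemma asymptotic_second_order_tangent_cone_eq: "asymptotic_second_order_tangent_cone S y v = second_order_tangent 0 S y v"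
  unfolding asymptotic_second_order_tangent_cone_def second_order_tangent_def by blast

lemma second_order_tangent_set_eq: "second_order_tangent_set S y v = second_order_tangent 1 S y v"
proof (intro set_eqI iffI)
  fix w assume "w \<in> second_order_tangent_set S y v"
  then obtain t ww where h: "\<forall>k. t k > 0" "t \<longlonglongrightarrow> 0" "ww \<longlonglongrightarrow> w"
      "\<forall>k. y + t k *\<^sub>R v + ((1/2) * (t k)\<^sup>2) *\<^sub>R ww k \<in> S"
    unfolding second_order_tangent_set_def by blast
  have "(\<lambda>k. t k / t k) = (\<lambda>k. 1)" using h(1) by (metis less_irrefl divide_self)
  then have "(\<lambda>k. t k / t k) \<longlonglongrightarrow> 1" by simp
  moreover have "\<forall>k. y + t k *\<^sub>R v + ((1/2) * t k * t k) *\<^sub>R ww k \<in> S"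
    using h(4) by (simp add: power2_eq_square mult.assoc)
  ultimately show "w \<in> second_order_tangent 1 S y v" unfolding second_order_tangent_def using h by blast
next
  fix w assume "w \<in> second_order_tangent 1 S y v"
  then obtain t r ww where h: "\<forall>k. t k > 0 \<and> r k > 0" "t \<longlonglongrightarrow> 0" "r \<longlonglongrightarrow> 0"
      "(\<lambda>k. t k / r k) \<longlonglongrightarrow> 1" "ww \<longlonglongrightarrow> w"
      "\<forall>k. y + t k *\<^sub>R v + ((1/2) * t k * r k) *\<^sub>R ww k \<in> S"
    unfolding second_order_tangent_def by blast
  have "(\<lambda>k. inverse (t k / r k)) \<longlonglongrightarrow> inverse 1"
    by (rule tendsto_inverse[OF h(4)]) simp
  then have "(\<lambda>k. r k / t k) \<longlonglongrightarrow> 1" by simp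
  then have c: "(\<lambda>k. (r k / t k) *\<^sub>R ww k) \<longlonglongrightarrow> 1 *\<^sub>R w"
    by (intro tendsto_scaleR h(5))
  have "\<forall>k. y + t k *\<^sub>R v + ((1/2) * (t k)\<^sup>2) *\<^sub>R ((r k / t k) *\<^sub>R ww k) \<in> S"
  proof
    fix k
    have sc: "((1/2) * (t k)\<^sup>2) * (r k / t k) = (1/2) * t k * r k"
      using h(1) by (simp add: power2_eq_square field_simps)
    have "((1/2) * (t k)\<^sup>2) *\<^sub>R ((r k / t k) *\<^sub>R ww k) = ((1/2) * t k * r k) *\<^sub>R ww k"
      by (simp only: scaleR_scaleR sc)
    then show "y + t k *\<^sub>R v + ((1/2) * (t k)\<^sup>2) *\<^sub>R ((r k / t k) *\<^sub>R ww k) \<in> S"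
      using h(6) by metis
  qed
  then show "w \<in> second_order_tangent_set S y v"
    unfolding second_order_tangent_set_def using h c by (intro CollectI exI[of _ t] exI[of _ "\<lambda>k. (r k / t k) *\<^sub>R ww k"]) auto
qed

lemma LIMSEQ_zero_by_inverse_Suc:
  fixes f :: "nat \<Rightarrow> 'c::real_normed_vector"
  assumes "\<And>n. norm (f n) \<le> inverse (real (Suc n))"
  shows "f \<longlonglongrightarrow> 0"
  by (rule Lim_null_comparison[OF _ LIMSEQ_inverse_real_of_nat]) (use assms in auto)

lemma choice2:
  assumes "\<forall>n::nat. \<exists>x y. P n x y"
  shows "\<exists>X Y. \<forall>n. P n (X n) (Y n)"
proof -
  from assms have "\<forall>n. \<exists>p. P n (fst p) (snd p)" by auto
  then obtain F where "\<forall>n. P n (fst (F n)) (snd (F n))" by (rule choice[THEN exE])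
  then show ?thesis by (intro exI[of _ "\<lambda>n. fst (F n)"] exI[of _ "\<lambda>n. snd (F n)"]) simp
qed

lemma choice3:
  assumes h0: "\<forall>n::nat. \<exists>t r ww. P n t r ww"
  shows "\<exists>T R WW. \<forall>n. P n (T n) (R n) (WW n)"
proof -
  from h0 have "\<forall>n. \<exists>p. P n (fst p) (fst (snd p)) (snd (snd p))" by auto
  then obtain F where "\<forall>n. P n (fst (F n)) (fst (snd (F n))) (snd (snd (F n)))" by (rule choice[THEN exE])
  then show ?thesis
    by (intro exI[of _ "\<lambda>n. fst (F n)"] exI[of _ "\<lambda>n. fst (snd (F n))"] exI[of _ "\<lambda>n. snd (snd (F n))"]) simp
qed

lemma second_order_tangentI_subseq:
  assumes tr: "\<forall>k. t k > 0 \<and> r k > 0" and t0: "t \<longlonglongrightarrow> 0" and r0: "r \<longlonglongrightarrow> 0"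
    and tc: "(\<lambda>k. t k / r k) \<longlonglongrightarrow> c" and ch: "strict_mono ch" and lim: "(\<lambda>k. ww (ch k)) \<longlonglongrightarrow> w"
    and mem: "\<And>k. y + t (ch k) *\<^sub>R v + ((1/2) * t (ch k) * r (ch k)) *\<^sub>R ww (ch k) \<in> S"
  shows "w \<in> second_order_tangent c S y v"
  unfolding second_order_tangent_def
proof (intro CollectI exI conjI)
  show "\<forall>k. (t \<circ> ch) k > 0 \<and> (r \<circ> ch) k > 0" using tr by simp
  show "(t \<circ> ch) \<longlonglongrightarrow> 0" by (rule LIMSEQ_subseq_LIMSEQ[OF t0 ch])
  show "(r \<circ> ch) \<longlonglongrightarrow> 0" by (rule LIMSEQ_subseq_LIMSEQ[OF r0 ch])
  show "(\<lambda>k. (t \<circ> ch) k / (r \<circ> ch) k) \<longlonglongrightarrow> c"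
    using LIMSEQ_subseq_LIMSEQ[OF tc ch] by (simp add: comp_def)
  show "(\<lambda>k. ww (ch k)) \<longlonglongrightarrow> w" by (rule lim)
  show "\<forall>k. y + (t \<circ> ch) k *\<^sub>R v + ((1/2) * (t \<circ> ch) k * (r \<circ> ch) k) *\<^sub>R ww (ch k) \<in> S"
    using mem by simp
qed

lemma convergent_subseq_beyond:
  fixes f :: "nat \<Rightarrow> 'a::{heine_borel,real_normed_vector}"
  assumes bnd: "\<And>k. N \<le> k \<Longrightarrow> norm (f k - c) \<le> B"
  shows "\<exists>ch l. strict_mono ch \<and> (\<forall>k. N \<le> ch k) \<and> (\<lambda>k. f (ch k)) \<longlonglongrightarrow> l"
proof -
  have "norm (f (k + N)) \<le> norm c + B" for k
    using bnd[of "k + N"] norm_triangle_ineq2[of "f (k + N)" c] by simp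
  then have "bounded (range (\<lambda>k. f (k + N)))" unfolding bounded_iff by blast
  then obtain l \<phi> where \<phi>: "strict_mono \<phi>" "((\<lambda>k. f (k + N)) \<circ> \<phi>) \<longlonglongrightarrow> l"
    using bounded_imp_convergent_subsequence by blast
  have "strict_mono (\<lambda>k. \<phi> k + N)" using \<phi>(1) by (simp add: strict_mono_def)
  moreover have "(\<lambda>k. f (\<phi> k + N)) \<longlonglongrightarrow> l" using \<phi>(2) by (simp add: comp_def)
  ultimately show ?thesis by (intro exI[of _ "\<lambda>k. \<phi> k + N"] exI[of _ l]) auto
qed

lemma closed_second_order_tangent: "closed (second_order_tangent c S y v)"
  unfolding closed_sequential_limits
proof (intro allI impI, elim conjE)
  fix x l assume xU: "\<forall>n. x n \<in> second_order_tangent c S y v" and xl: "x \<longlonglongrightarrow> l"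
  have ex1: "\<forall>n. \<exists>t r ww. (\<forall>k. t k > 0 \<and> r k > 0) \<and> t \<longlonglongrightarrow> 0 \<and> r \<longlonglongrightarrow> 0
      \<and> (\<lambda>k. t k / r k) \<longlonglongrightarrow> c \<and> ww \<longlonglongrightarrow> x n
      \<and> (\<forall>k. y + t k *\<^sub>R v + ((1/2) * t k * r k) *\<^sub>R ww k \<in> S)"
    using xU unfolding second_order_tangent_def by blast
  obtain T R WW where h: "\<And>n. (\<forall>k. T n k > 0 \<and> R n k > 0) \<and> T n \<longlonglongrightarrow> 0 \<and> R n \<longlonglongrightarrow> 0
      \<and> (\<lambda>k. T n k / R n k) \<longlonglongrightarrow> c \<and> WW n \<longlonglongrightarrow> x n
      \<and> (\<forall>k. y + T n k *\<^sub>R v + ((1/2) * T n k * R n k) *\<^sub>R WW n k \<in> S)"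
    using choice3[OF ex1] by blast
  have ex2: "\<forall>n. \<exists>m. T n m < inverse (real (Suc n)) \<and> R n m < inverse (real (Suc n))
      \<and> norm (T n m / R n m - c) < inverse (real (Suc n)) \<and> norm (WW n m - x n) < inverse (real (Suc n))"
  proof
    fix n
    define e where "e = inverse (real (Suc n))"
    have e: "e > 0" unfolding e_def by simp
    have "eventually (\<lambda>m. T n m < e) sequentially" using order_tendstoD(2)[of "T n" 0 sequentially e] h e by blast
    moreover have "eventually (\<lambda>m. R n m < e) sequentially" using order_tendstoD(2)[of "R n" 0 sequentially e] h e by blast
    moreover have "eventually (\<lambda>m. dist (T n m / R n m) c < e) sequentially"
      using h[of n] e by (auto simp: tendsto_iff)
    moreover have "eventually (\<lambda>m. dist (WW n m) (x n) < e) sequentially"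
      using h[of n] e by (auto simp: tendsto_iff)
    ultimately have "eventually (\<lambda>m. T n m < e \<and> R n m < e \<and> norm (T n m / R n m - c) < e \<and> norm (WW n m - x n) < e) sequentially"
      by eventually_elim (simp add: dist_norm)
    then show "\<exists>m. T n m < inverse (real (Suc n)) \<and> R n m < inverse (real (Suc n))
      \<and> norm (T n m / R n m - c) < inverse (real (Suc n)) \<and> norm (WW n m - x n) < inverse (real (Suc n))"
      unfolding e_def using eventually_happens'[OF trivial_limit_sequentially] by blast
  qed
  obtain M where M: "\<And>n. T n (M n) < inverse (real (Suc n)) \<and> R n (M n) < inverse (real (Suc n))
      \<and> norm (T n (M n) / R n (M n) - c) < inverse (real (Suc n)) \<and> norm (WW n (M n) - x n) < inverse (real (Suc n))"
    using choice[OF ex2] by blast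
  show "l \<in> second_order_tangent c S y v" unfolding second_order_tangent_def
  proof (intro CollectI exI conjI)
    show "\<forall>n. T n (M n) > 0 \<and> R n (M n) > 0" using h by blast
    show "(\<lambda>n. T n (M n)) \<longlonglongrightarrow> 0"
      by (rule LIMSEQ_zero_by_inverse_Suc) (use M h in \<open>auto intro: less_imp_le simp: abs_of_pos\<close>)
    show "(\<lambda>n. R n (M n)) \<longlonglongrightarrow> 0"
      by (rule LIMSEQ_zero_by_inverse_Suc) (use M h in \<open>auto intro: less_imp_le simp: abs_of_pos\<close>)
    show "(\<lambda>n. T n (M n) / R n (M n)) \<longlonglongrightarrow> c"
      by (rule LIM_zero_cancel, rule LIMSEQ_zero_by_inverse_Suc) (use M in \<open>auto intro: less_imp_le\<close>)
    have "(\<lambda>n. WW n (M n) - x n) \<longlonglongrightarrow> 0"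
      by (rule LIMSEQ_zero_by_inverse_Suc) (use M in \<open>auto intro: less_imp_le\<close>)
    from tendsto_add[OF this xl] show "(\<lambda>n. WW n (M n)) \<longlonglongrightarrow> l" by simp
    show "\<forall>n. y + T n (M n) *\<^sub>R v + ((1/2) * T n (M n) * R n (M n)) *\<^sub>R WW n (M n) \<in> S"
      using h by blast
  qed
qed

lemma tangent_cone_imp_zero_second_order_tangent:
  assumes d: "d \<in> tangent_cone C xbar"
  shows "0 \<in> second_order_tangent 0 C xbar d"
proof -
  obtain t dd where h: "\<forall>k. t k > 0" "t \<longlonglongrightarrow> 0" "dd \<longlonglongrightarrow> d" "\<forall>k. xbar + t k *\<^sub>R dd k \<in> C"
    using d unfolding tangent_cone_def by blast
  define r where "r k = max (sqrt (norm (dd k - d))) (sqrt (t k))" for k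
  have rpos: "r k > 0" for k unfolding r_def using h(1) by (simp add: less_max_iff_disj)
  have nd: "(\<lambda>k. norm (dd k - d)) \<longlonglongrightarrow> 0"
    using h(3) by (simp add: LIM_zero tendsto_norm_zero)
  have r0: "r \<longlonglongrightarrow> 0"
  proof -
    have "(\<lambda>k. max (sqrt (norm (dd k - d))) (sqrt (t k))) \<longlonglongrightarrow> max (sqrt 0) (sqrt 0)"
      by (intro tendsto_intros nd h(2))
    then show ?thesis unfolding r_def by simp
  qed
  define ww where "ww k = (2 / r k) *\<^sub>R (dd k - d)" for k
  show ?thesis unfolding second_order_tangent_def
  proof (intro CollectI exI conjI)
    show "\<forall>k. t k > 0 \<and> r k > 0" using h(1) rpos by simp
    show "t \<longlonglongrightarrow> 0" by (rule h(2))
    show "r \<longlonglongrightarrow> 0" by (rule r0)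
    show "(\<lambda>k. t k / r k) \<longlonglongrightarrow> 0"
    proof (rule Lim_null_comparison[where g="\<lambda>k. sqrt (t k)"])
      show "eventually (\<lambda>k. norm (t k / r k) \<le> sqrt (t k)) sequentially"
      proof (intro always_eventually allI)
        fix k
        have tk: "t k > 0" using h(1) by simp
        have "sqrt (t k) \<le> r k" unfolding r_def by simp
        then have "t k / r k \<le> t k / sqrt (t k)"
          using tk rpos[of k] by (intro divide_left_mono) auto
        also have "\<dots> = sqrt (t k)" using tk by (simp add: real_div_sqrt)
        finally show "norm (t k / r k) \<le> sqrt (t k)" using tk rpos[of k] by simp
      qed
      show "(\<lambda>k. sqrt (t k)) \<longlonglongrightarrow> 0" using tendsto_real_sqrt[OF h(2)] by simp
    qed
    show "ww \<longlonglongrightarrow> 0"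
    proof (rule Lim_null_comparison[where g="\<lambda>k. 2 * sqrt (norm (dd k - d))"])
      show "eventually (\<lambda>k. norm (ww k) \<le> 2 * sqrt (norm (dd k - d))) sequentially"
      proof (intro always_eventually allI)
        fix k
        have "norm (ww k) = 2 * norm (dd k - d) / r k" unfolding ww_def using rpos[of k] by simp
        also have "\<dots> \<le> 2 * sqrt (norm (dd k - d))"
        proof (cases "norm (dd k - d) = 0")
          case True then show ?thesis by simp
        next
          case False
          then have np: "norm (dd k - d) > 0" by simp
          have "sqrt (norm (dd k - d)) \<le> r k" unfolding r_def by simp
          then have "norm (dd k - d) / r k \<le> norm (dd k - d) / sqrt (norm (dd k - d))"
            using np rpos[of k] by (intro divide_left_mono) auto
          also have "\<dots> = sqrt (norm (dd k - d))" using np by (simp add: real_div_sqrt)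
          finally show ?thesis by simp
        qed
        finally show "norm (ww k) \<le> 2 * sqrt (norm (dd k - d))" .
      qed
      show "(\<lambda>k. 2 * sqrt (norm (dd k - d))) \<longlonglongrightarrow> 0"
        using tendsto_mult[OF tendsto_const tendsto_real_sqrt[OF nd], of 2] by simp
    qed
    show "\<forall>k. xbar + t k *\<^sub>R d + ((1/2) * t k * r k) *\<^sub>R ww k \<in> C"
    proof
      fix k
      have "xbar + t k *\<^sub>R d + ((1/2) * t k * r k) *\<^sub>R ww k = xbar + t k *\<^sub>R dd k"
        unfolding ww_def using rpos[of k] by (simp add: algebra_simps)
      then show "xbar + t k *\<^sub>R d + ((1/2) * t k * r k) *\<^sub>R ww k \<in> C" using h(4) by (metis add.assoc)
    qed
  qed
qed

lemma onorm_scaleR_const: "onorm (\<lambda>h::real. h *\<^sub>R c) = norm c"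
proof -
  have "onorm (\<lambda>h::real. h *\<^sub>R c) = onorm (\<lambda>x::real. x) * norm c"
    by (rule onorm_scaleR_left) (rule bounded_linear_ident)
  moreover have "onorm (\<lambda>x::real. x) = 1" by (rule onorm_id)
  ultimately show ?thesis by simp
qed

lemma second_order_taylor_remainder:
  fixes \<phi> :: "'a::real_normed_vector \<Rightarrow> 'c::real_normed_vector"
  assumes d1: "\<And>x. (\<phi> has_derivative blinfun_apply (\<phi>' x)) (at x)"
    and d2: "(\<phi>' has_derivative blinfun_apply H2) (at x0)"
    and e: "e > 0"
  shows "\<exists>\<delta>>0. \<forall>u. norm u < \<delta> \<longrightarrow>
     norm (\<phi> (x0+u) - \<phi> x0 - \<phi>' x0 u - (1/2) *\<^sub>R H2 u u) \<le> e * (norm u)\<^sup>2"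
proof -
  obtain \<delta> where \<delta>: "\<delta> > 0" and h\<delta>: "\<forall>y. norm (y - x0) < \<delta> \<longrightarrow>
      norm (\<phi>' y - \<phi>' x0 - H2 (y - x0)) \<le> e * norm (y - x0)"
    using d2[unfolded has_derivative_at_alt] e by blast
  have "\<forall>u. norm u < \<delta> \<longrightarrow>
     norm (\<phi> (x0+u) - \<phi> x0 - \<phi>' x0 u - (1/2) *\<^sub>R H2 u u) \<le> e * (norm u)\<^sup>2"
  proof (intro allI impI)
    fix u :: 'a assume nu: "norm u < \<delta>"
    define \<psi> where "\<psi> s = \<phi> (x0 + s *\<^sub>R u) - s *\<^sub>R \<phi>' x0 u - (s\<^sup>2/2) *\<^sub>R H2 u u" for s :: real
    define D where "D s = \<phi>' (x0 + s *\<^sub>R u) u - \<phi>' x0 u - s *\<^sub>R H2 u u" for s :: real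
    have der: "(\<psi> has_derivative (\<lambda>h. h *\<^sub>R D s)) (at s within {0..1})" for s
    proof -
      have a: "((\<lambda>s. x0 + s *\<^sub>R u) has_derivative (\<lambda>h. h *\<^sub>R u)) (at s within {0..1})"
        by (auto intro!: derivative_eq_intros)
      have b: "((\<lambda>s. \<phi> (x0 + s *\<^sub>R u)) has_derivative (\<lambda>h. \<phi>' (x0 + s *\<^sub>R u) (h *\<^sub>R u))) (at s within {0..1})"
        by (rule has_derivative_compose[OF a d1])
      have c: "((\<lambda>s::real. s *\<^sub>R \<phi>' x0 u) has_derivative (\<lambda>h. h *\<^sub>R \<phi>' x0 u)) (at s within {0..1})"
        by (auto intro!: derivative_eq_intros)
      have c2: "((\<lambda>s::real. (s\<^sup>2/2) *\<^sub>R H2 u u) has_derivative (\<lambda>h. h *\<^sub>R (s *\<^sub>R H2 u u))) (at s within {0..1})"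
        by (auto intro!: derivative_eq_intros simp: algebra_simps)
      have "(\<psi> has_derivative (\<lambda>h. \<phi>' (x0 + s *\<^sub>R u) (h *\<^sub>R u) - h *\<^sub>R \<phi>' x0 u - h *\<^sub>R (s *\<^sub>R H2 u u))) (at s within {0..1})"
        unfolding \<psi>_def by (intro has_derivative_diff b c c2)
      moreover have "(\<lambda>h. \<phi>' (x0 + s *\<^sub>R u) (h *\<^sub>R u) - h *\<^sub>R \<phi>' x0 u - h *\<^sub>R (s *\<^sub>R H2 u u)) = (\<lambda>h. h *\<^sub>R D s)"
        unfolding D_def by (auto simp: blinfun.scaleR_right algebra_simps)
      ultimately show ?thesis by simp
    qed
    have bnd: "onorm (\<lambda>h. h *\<^sub>R D s) \<le> e * (norm u)\<^sup>2" if s: "s \<in> {0..1}" for s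
    proof -
      have "D s = blinfun_apply (\<phi>' (x0 + s *\<^sub>R u) - \<phi>' x0 - H2 ((x0 + s *\<^sub>R u) - x0)) u"
        unfolding D_def by (simp add: blinfun.bilinear_simps)
      then have "norm (D s) \<le> norm (\<phi>' (x0 + s *\<^sub>R u) - \<phi>' x0 - H2 ((x0 + s *\<^sub>R u) - x0)) * norm u"
        using norm_blinfun by metis
      also have "\<dots> \<le> (e * norm ((x0 + s *\<^sub>R u) - x0)) * norm u"
      proof (rule mult_right_mono)
        have "norm ((x0 + s *\<^sub>R u) - x0) = \<bar>s\<bar> * norm u" by simp
        also have "\<dots> \<le> norm u" using s by (auto intro: mult_left_le_one_le)
        finally show "norm (\<phi>' (x0 + s *\<^sub>R u) - \<phi>' x0 - H2 ((x0 + s *\<^sub>R u) - x0)) \<le> e * norm ((x0 + s *\<^sub>R u) - x0)"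
          using h\<delta>[rule_format, of "x0 + s *\<^sub>R u"] nu by auto
      qed simp
      also have "\<dots> \<le> (e * norm u) * norm u"
      proof (intro mult_right_mono mult_left_mono)
        show "norm ((x0 + s *\<^sub>R u) - x0) \<le> norm u" using s by (auto intro: mult_left_le_one_le)
      qed (use e in auto)
      finally show ?thesis by (simp add: onorm_scaleR_const power2_eq_square mult.assoc)
    qed
    have "norm (\<psi> 1 - \<psi> 0) \<le> e * (norm u)\<^sup>2 * norm (1 - (0::real))"
      by (rule differentiable_bound[OF convex_real_interval(5) der bnd]) auto
    moreover have "\<psi> 1 - \<psi> 0 = \<phi> (x0+u) - \<phi> x0 - \<phi>' x0 u - (1/2) *\<^sub>R H2 u u"
      unfolding \<psi>_def by simp
    ultimately show "norm (\<phi> (x0+u) - \<phi> x0 - \<phi>' x0 u - (1/2) *\<^sub>R H2 u u) \<le> e * (norm u)\<^sup>2" by simp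
  qed
  then show ?thesis using \<delta> by blast
qed

lemma square_sum_le: "(a + b)\<^sup>2 \<le> 2 * a\<^sup>2 + 2 * (b::real)\<^sup>2"
proof -
  have "0 \<le> (a - b)\<^sup>2" by simp
  then show ?thesis by (simp add: power2_eq_square algebra_simps)
qed

lemma taylor_remainder_quotient_tendsto_zero:
  fixes \<phi> :: "'a::real_normed_vector \<Rightarrow> 'c::real_normed_vector"
  assumes d1: "\<And>x. (\<phi> has_derivative blinfun_apply (\<phi>' x)) (at x)"
    and d2: "(\<phi>' has_derivative blinfun_apply H2) (at x0)"
    and u0: "u \<longlonglongrightarrow> 0" and \<sigma>pos: "\<And>k. \<sigma> k > 0" and B: "B > 0"
    and bound: "eventually (\<lambda>k. (norm (u k))\<^sup>2 \<le> \<sigma> k * B) sequentially"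
  shows "(\<lambda>k. (\<phi> (x0 + u k) - \<phi> x0 - \<phi>' x0 (u k) - (1/2) *\<^sub>R H2 (u k) (u k)) /\<^sub>R \<sigma> k) \<longlonglongrightarrow> 0"
proof -
  define R where "R k = \<phi> (x0 + u k) - \<phi> x0 - \<phi>' x0 (u k) - (1/2) *\<^sub>R H2 (u k) (u k)" for k
  have "(\<lambda>k. R k /\<^sub>R \<sigma> k) \<longlonglongrightarrow> 0"
  proof (rule tendstoI)
    fix e :: real assume e: "e > 0"
    define e' where "e' = e / (2 * B)"
    have e': "e' > 0" unfolding e'_def using e B by simp
    obtain \<delta> where \<delta>: "\<delta> > 0" and h\<delta>: "\<forall>u. norm u < \<delta> \<longrightarrow>
        norm (\<phi> (x0+u) - \<phi> x0 - \<phi>' x0 u - (1/2) *\<^sub>R H2 u u) \<le> e' * (norm u)\<^sup>2"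
      using second_order_taylor_remainder[OF d1 d2 e'] by blast
    have "eventually (\<lambda>k. norm (u k) < \<delta>) sequentially"
      using order_tendstoD(2)[OF tendsto_norm[OF u0], of \<delta>] \<delta> by simp
    then show "eventually (\<lambda>k. dist (R k /\<^sub>R \<sigma> k) 0 < e) sequentially"
      using bound
    proof eventually_elim
      case (elim k)
      have "norm (R k) \<le> e' * (norm (u k))\<^sup>2" unfolding R_def using h\<delta> elim(1) by blast
      also have "\<dots> \<le> e' * (\<sigma> k * B)" using elim(2) e' by (simp add: mult_left_mono)
      also have "\<dots> < e * \<sigma> k" unfolding e'_def using B \<sigma>pos[of k] e by (simp add: field_simps)
      finally show ?case using \<sigma>pos[of k] by (simp add: field_simps)
    qed
  qed
  then show ?thesis unfolding R_def .
qed

lemma second_order_quotient_tendsto: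
  fixes \<phi> :: "'a::real_normed_vector \<Rightarrow> 'c::real_normed_vector"
  assumes d1: "\<And>x. (\<phi> has_derivative blinfun_apply (\<phi>' x)) (at x)"
    and d2: "(\<phi>' has_derivative blinfun_apply H2) (at x0)"
    and tr: "\<forall>k. t k > 0 \<and> r k > 0" and t0: "t \<longlonglongrightarrow> 0" and r0: "r \<longlonglongrightarrow> 0"
    and tc: "(\<lambda>k. t k / r k) \<longlonglongrightarrow> c" and ww: "ww \<longlonglongrightarrow> w"
  shows "(\<lambda>k. (\<phi> (x0 + (t k *\<^sub>R d + ((1/2) * t k * r k) *\<^sub>R ww k)) - \<phi> x0 - t k *\<^sub>R \<phi>' x0 d)
            /\<^sub>R ((1/2) * t k * r k)) \<longlonglongrightarrow> \<phi>' x0 w + c *\<^sub>R H2 d d"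
proof -
  define \<sigma> where "\<sigma> k = (1/2) * t k * r k" for k
  define u where "u k = t k *\<^sub>R d + \<sigma> k *\<^sub>R ww k" for k
  define R where "R k = \<phi> (x0 + u k) - \<phi> x0 - \<phi>' x0 (u k) - (1/2) *\<^sub>R H2 (u k) (u k)" for k
  define Q where "Q k = (t k / r k) *\<^sub>R H2 d d + (t k/2) *\<^sub>R (H2 d (ww k) + H2 (ww k) d)
      + (\<sigma> k/2) *\<^sub>R H2 (ww k) (ww k)" for k
  have \<sigma>pos: "\<sigma> k > 0" for k using tr unfolding \<sigma>_def by simp
  have "(\<lambda>k. (1/2) * t k * r k) \<longlonglongrightarrow> (1/2) * 0 * 0" by (intro tendsto_intros t0 r0)
  then have \<sigma>0: "\<sigma> \<longlonglongrightarrow> 0" unfolding \<sigma>_def by simp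
  have eq: "(\<phi> (x0 + (t k *\<^sub>R d + ((1/2) * t k * r k) *\<^sub>R ww k)) - \<phi> x0 - t k *\<^sub>R \<phi>' x0 d)
            /\<^sub>R ((1/2) * t k * r k) = R k /\<^sub>R \<sigma> k + \<phi>' x0 (ww k) + Q k" for k
  proof -
    have s: "\<sigma> k \<noteq> 0" using \<sigma>pos[of k] by simp
    have tr': "t k > 0" "r k > 0" using tr by auto
    have HH: "H2 (u k) (u k) = (t k * t k) *\<^sub>R H2 d d + (t k * \<sigma> k) *\<^sub>R (H2 d (ww k) + H2 (ww k) d)
       + (\<sigma> k * \<sigma> k) *\<^sub>R H2 (ww k) (ww k)"
      unfolding u_def by (simp add: blinfun.bilinear_simps algebra_simps)
    have "\<sigma> k *\<^sub>R (R k /\<^sub>R \<sigma> k + \<phi>' x0 (ww k) + Q k) = R k + \<sigma> k *\<^sub>R \<phi>' x0 (ww k) + \<sigma> k *\<^sub>R Q k"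
      using s by (simp add: algebra_simps)
    also have "\<sigma> k *\<^sub>R Q k = (1/2) *\<^sub>R H2 (u k) (u k)"
    proof -
      have a: "\<sigma> k * (t k / r k) = (1/2) * (t k * t k)" unfolding \<sigma>_def using tr' by (simp add: field_simps)
      have a2: "\<sigma> k * (t k * 2) / r k = t k * t k" unfolding \<sigma>_def using tr' by (simp add: field_simps)
      show ?thesis unfolding HH Q_def
        by (simp add: scaleR_add_right scaleR_scaleR a a2 algebra_simps)
    qed
    also have "R k + \<sigma> k *\<^sub>R \<phi>' x0 (ww k) + (1/2) *\<^sub>R H2 (u k) (u k)
        = \<phi> (x0 + u k) - \<phi> x0 - t k *\<^sub>R \<phi>' x0 d"
      unfolding R_def u_def by (simp add: blinfun.bilinear_simps algebra_simps)
    finally have "\<sigma> k *\<^sub>R (R k /\<^sub>R \<sigma> k + \<phi>' x0 (ww k) + Q k) = \<phi> (x0 + u k) - \<phi> x0 - t k *\<^sub>R \<phi>' x0 d" .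
    then have "R k /\<^sub>R \<sigma> k + \<phi>' x0 (ww k) + Q k = (\<phi> (x0 + u k) - \<phi> x0 - t k *\<^sub>R \<phi>' x0 d) /\<^sub>R \<sigma> k"
      using s by (metis (no_types, lifting) scaleR_left_imp_eq scaleR_scaleR right_inverse scaleR_one)
    then show ?thesis unfolding u_def \<sigma>_def by simp
  qed
  have u0: "u \<longlonglongrightarrow> 0"
    unfolding u_def using tendsto_add[OF tendsto_scaleR[OF t0 tendsto_const] tendsto_scaleR[OF \<sigma>0 ww]] by simp
  have Qlim: "Q \<longlonglongrightarrow> c *\<^sub>R H2 d d + (0/2) *\<^sub>R (H2 d w + H2 w d) + (0/2) *\<^sub>R H2 w w"
    unfolding Q_def by (intro tendsto_intros tc t0 \<sigma>0 ww) simp_all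
  have Rlim: "(\<lambda>k. R k /\<^sub>R \<sigma> k) \<longlonglongrightarrow> 0"
  proof -
    define \<beta> where "\<beta> k = 4 * (t k / r k) * (norm d)\<^sup>2 + 2 * \<sigma> k * (norm (ww k))\<^sup>2" for k
    have \<beta>lim: "\<beta> \<longlonglongrightarrow> 4 * c * (norm d)\<^sup>2 + 2 * 0 * (norm w)\<^sup>2"
      unfolding \<beta>_def by (intro tendsto_intros tc \<sigma>0 ww)
    define B where "B = \<bar>4 * c * (norm d)\<^sup>2\<bar> + 1"
    have evB: "eventually (\<lambda>k. \<beta> k < B) sequentially"
      using order_tendstoD(2)[OF \<beta>lim, of B] unfolding B_def by simp
    have ub: "(norm (u k))\<^sup>2 \<le> \<sigma> k * \<beta> k" for k
    proof -
      have tr': "t k > 0" "r k > 0" using tr by auto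
      have "norm (u k) \<le> t k * norm d + \<sigma> k * norm (ww k)"
        unfolding u_def using norm_triangle_ineq[of "t k *\<^sub>R d" "\<sigma> k *\<^sub>R ww k"] tr' \<sigma>pos[of k] by simp
      then have "(norm (u k))\<^sup>2 \<le> (t k * norm d + \<sigma> k * norm (ww k))\<^sup>2"
        by (intro power_mono) auto
      also have "\<dots> \<le> 2 * (t k * norm d)\<^sup>2 + 2 * (\<sigma> k * norm (ww k))\<^sup>2"
        by (rule square_sum_le)
      also have "\<dots> = \<sigma> k * \<beta> k"
        unfolding \<beta>_def \<sigma>_def using tr' by (simp add: power2_eq_square field_simps)
      finally show ?thesis .
    qed
    have "eventually (\<lambda>k. (norm (u k))\<^sup>2 \<le> \<sigma> k * B) sequentially"
      using evB by eventually_elim (use ub \<sigma>pos in \<open>smt (verit) mult_left_mono\<close>)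
    from taylor_remainder_quotient_tendsto_zero[OF d1 d2 u0 \<sigma>pos _ this]
    show ?thesis unfolding R_def B_def by simp
  qed
  have "(\<lambda>k. R k /\<^sub>R \<sigma> k + \<phi>' x0 (ww k) + Q k) \<longlonglongrightarrow> 0 + \<phi>' x0 w + (c *\<^sub>R H2 d d + (0/2) *\<^sub>R (H2 d w + H2 w d) + (0/2) *\<^sub>R H2 w w)"
    by (intro tendsto_add Rlim Qlim blinfun.tendsto[OF tendsto_const ww])
  then show ?thesis unfolding eq by simp
qed

lemma eventually_in_dir_nbhd:
  fixes d :: "'a::real_normed_vector"
  assumes "\<rho> > 0" "\<delta> > 0" "\<forall>k. \<tau> k > 0" "\<tau> \<longlonglongrightarrow> 0" "p \<longlonglongrightarrow> d"
  shows "eventually (\<lambda>k. \<tau> k *\<^sub>R p k \<in> dir_nbhd \<rho> \<delta> d) sequentially"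
proof -
  have "(\<lambda>k. \<tau> k *\<^sub>R p k) \<longlonglongrightarrow> 0 *\<^sub>R d" by (intro tendsto_scaleR assms)
  then have "(\<lambda>k. norm (\<tau> k *\<^sub>R p k)) \<longlonglongrightarrow> 0" using tendsto_norm by fastforce
  then have e1: "eventually (\<lambda>k. norm (\<tau> k *\<^sub>R p k) < \<delta>) sequentially"
    using assms(2) by (simp add: order_tendstoD(2))
  have e2: "eventually (\<lambda>k. norm (norm d *\<^sub>R p k - norm (p k) *\<^sub>R d) \<le> \<rho> * norm (p k) * norm d) sequentially"
  proof (cases "d = 0")
    case True then show ?thesis by simp
  next
    case False
    have "(\<lambda>k. norm (norm d *\<^sub>R p k - norm (p k) *\<^sub>R d)) \<longlonglongrightarrow> norm (norm d *\<^sub>R d - norm d *\<^sub>R d)"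
      by (intro tendsto_intros assms)
    then have l1: "(\<lambda>k. norm (norm d *\<^sub>R p k - norm (p k) *\<^sub>R d)) \<longlonglongrightarrow> 0" by simp
    have l2: "(\<lambda>k. \<rho> * norm (p k) * norm d) \<longlonglongrightarrow> \<rho> * norm d * norm d"
      by (intro tendsto_intros assms)
    have "0 < \<rho> * norm d * norm d" using False assms(1) by simp
    then have "eventually (\<lambda>k. norm (norm d *\<^sub>R p k - norm (p k) *\<^sub>R d) < (\<rho> * norm d * norm d)/2) sequentially"
      using order_tendstoD(2)[OF l1, of "(\<rho> * norm d * norm d)/2"] by simp
    moreover have "eventually (\<lambda>k. (\<rho> * norm d * norm d)/2 < \<rho> * norm (p k) * norm d) sequentially"
      using order_tendstoD(1)[OF l2, of "(\<rho> * norm d * norm d)/2"] \<open>0 < \<rho> * norm d * norm d\<close> by simp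
    ultimately show ?thesis by eventually_elim simp
  qed
  show ?thesis using e1 e2
  proof eventually_elim
    case (elim k)
    have t: "\<tau> k > 0" using assms(3) by simp
    have "norm (norm d *\<^sub>R (\<tau> k *\<^sub>R p k) - norm (\<tau> k *\<^sub>R p k) *\<^sub>R d)
        = \<tau> k * norm (norm d *\<^sub>R p k - norm (p k) *\<^sub>R d)"
    proof -
      have "norm d *\<^sub>R (\<tau> k *\<^sub>R p k) - norm (\<tau> k *\<^sub>R p k) *\<^sub>R d = \<tau> k *\<^sub>R (norm d *\<^sub>R p k - norm (p k) *\<^sub>R d)"
        using t by (simp add: algebra_simps)
      then show ?thesis using t by simp
    qed
    also have "\<dots> \<le> \<tau> k * (\<rho> * norm (p k) * norm d)" using elim(2) t by (simp add: mult_left_mono)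
    also have "\<dots> = \<rho> * norm (\<tau> k *\<^sub>R p k) * norm d" using t by simp
    finally show ?case unfolding dir_nbhd_def using elim(1) by simp
  qed
qed

lemma second_order_tangent_image:
  fixes g :: "'a::real_normed_vector \<Rightarrow> 'b::real_normed_vector"
  assumes g1: "\<And>x. (g has_derivative blinfun_apply (g' x)) (at x)"
    and g2: "(g' has_derivative blinfun_apply (g'' xbar)) (at xbar)"
    and w: "w \<in> second_order_tangent c (g -` K) xbar d"
  shows "g' xbar w + c *\<^sub>R g'' xbar d d \<in> second_order_tangent c K (g xbar) (g' xbar d)"
proof -
  obtain t r ww where h: "\<forall>k. t k > 0 \<and> r k > 0" "t \<longlonglongrightarrow> 0" "r \<longlonglongrightarrow> 0"
      "(\<lambda>k. t k / r k) \<longlonglongrightarrow> c" "ww \<longlonglongrightarrow> w"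
      "\<forall>k. xbar + t k *\<^sub>R d + ((1/2) * t k * r k) *\<^sub>R ww k \<in> g -` K"
    using w unfolding second_order_tangent_def by blast
  define zz where "zz k = (g (xbar + (t k *\<^sub>R d + ((1/2) * t k * r k) *\<^sub>R ww k)) - g xbar - t k *\<^sub>R g' xbar d)
            /\<^sub>R ((1/2) * t k * r k)" for k
  have lim: "zz \<longlonglongrightarrow> g' xbar w + c *\<^sub>R g'' xbar d d"
    unfolding zz_def by (rule second_order_quotient_tendsto[OF g1 g2 h(1-5)])
  have "g xbar + t k *\<^sub>R g' xbar d + ((1/2) * t k * r k) *\<^sub>R zz k \<in> K" for k
  proof -
    have "(1/2) * t k * r k \<noteq> 0" using h(1) by (simp add: less_imp_neq[symmetric])
    then have "g xbar + t k *\<^sub>R g' xbar d + ((1/2) * t k * r k) *\<^sub>R zz k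
       = g (xbar + t k *\<^sub>R d + ((1/2) * t k * r k) *\<^sub>R ww k)"
      unfolding zz_def by (simp add: add.assoc)
    then show ?thesis using h(6) by simp
  qed
  then show ?thesis unfolding second_order_tangent_def using h(1-4) lim by blast
qed

lemma second_order_tangent_optimality:
  fixes f :: "'a::real_normed_vector \<Rightarrow> real"
  assumes f1: "\<And>x. (f has_derivative blinfun_apply (f' x)) (at x)"
    and f2: "(f' has_derivative blinfun_apply (f'' xbar)) (at xbar)"
    and opt: "local_opt_dir f C xbar d"
    and crit: "f' xbar d = 0"
    and w: "w \<in> second_order_tangent c C xbar d"
  shows "f' xbar w + c * f'' xbar d d \<ge> 0"
proof -
  obtain t r ww where h: "\<forall>k. t k > 0 \<and> r k > 0" "t \<longlonglongrightarrow> 0" "r \<longlonglongrightarrow> 0"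
      "(\<lambda>k. t k / r k) \<longlonglongrightarrow> c" "ww \<longlonglongrightarrow> w"
      "\<forall>k. xbar + t k *\<^sub>R d + ((1/2) * t k * r k) *\<^sub>R ww k \<in> C"
    using w unfolding second_order_tangent_def by blast
  obtain \<rho> \<delta> where \<rho>: "\<rho> > 0" "\<delta> > 0" and hopt: "\<forall>w\<in>dir_nbhd \<rho> \<delta> d.
      xbar + w \<in> C \<longrightarrow> f xbar \<le> f (xbar + w)"
    using opt unfolding local_opt_dir_def by blast
  have lim: "(\<lambda>k. (f (xbar + (t k *\<^sub>R d + ((1/2) * t k * r k) *\<^sub>R ww k)) - f xbar - t k *\<^sub>R f' xbar d)
            /\<^sub>R ((1/2) * t k * r k)) \<longlonglongrightarrow> f' xbar w + c *\<^sub>R f'' xbar d d"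
    by (rule second_order_quotient_tendsto[OF f1 f2 h(1-5)])
  have p: "(\<lambda>k. d + (r k / 2) *\<^sub>R ww k) \<longlonglongrightarrow> d + (0/2) *\<^sub>R w"
    by (intro tendsto_intros h(3,5)) simp
  have ev: "eventually (\<lambda>k. t k *\<^sub>R (d + (r k / 2) *\<^sub>R ww k) \<in> dir_nbhd \<rho> \<delta> d) sequentially"
    using eventually_in_dir_nbhd[OF \<rho> _ h(2) p[simplified]] h(1) by blast
  have "eventually (\<lambda>k. 0 \<le> (f (xbar + (t k *\<^sub>R d + ((1/2) * t k * r k) *\<^sub>R ww k)) - f xbar - t k *\<^sub>R f' xbar d)
            /\<^sub>R ((1/2) * t k * r k)) sequentially"
    using ev
  proof eventually_elim
    case (elim k)
    have eq: "t k *\<^sub>R (d + (r k / 2) *\<^sub>R ww k) = t k *\<^sub>R d + ((1/2) * t k * r k) *\<^sub>R ww k"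
      by (simp add: algebra_simps)
    have "f xbar \<le> f (xbar + (t k *\<^sub>R d + ((1/2) * t k * r k) *\<^sub>R ww k))"
      using hopt elim h(6) unfolding eq by (simp add: add.assoc)
    moreover have "t k * r k > 0" using h(1) by simp
    ultimately show ?case using crit by simp
  qed
  from tendsto_lowerbound[OF lim this] show ?thesis by simp
qed

lemma second_order_tangent_subregular:
  fixes g :: "'a::euclidean_space \<Rightarrow> 'b::euclidean_space"
  assumes g1: "\<And>x. (g has_derivative blinfun_apply (g' x)) (at x)"
    and g2: "(g' has_derivative blinfun_apply (g'' xbar)) (at xbar)"
    and Kc: "closed K" and xC: "g xbar \<in> K"
    and \<rho>: "\<rho> > 0" "\<delta> > 0" and \<kappa>: "\<kappa> > 0"
    and ms: "\<forall>u\<in>dir_nbhd \<rho> \<delta> d. infdist (xbar+u) (g -` K) \<le> \<kappa> * infdist (g (xbar+u)) K"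
    and z: "z \<in> second_order_tangent c K (g xbar) (g' xbar d)"
  shows "\<exists>w'\<in>second_order_tangent c (g -` K) xbar d. norm (w' - w) \<le> \<kappa> * norm (g' xbar w + c *\<^sub>R g'' xbar d d - z)"
proof -
  obtain t r zz where h: "\<forall>k. t k > 0 \<and> r k > 0" "t \<longlonglongrightarrow> 0" "r \<longlonglongrightarrow> 0"
      "(\<lambda>k. t k / r k) \<longlonglongrightarrow> c" "zz \<longlonglongrightarrow> z"
      "\<forall>k. g xbar + t k *\<^sub>R g' xbar d + ((1/2) * t k * r k) *\<^sub>R zz k \<in> K"
    using z unfolding second_order_tangent_def by blast
  define \<sigma> where "\<sigma> k = (1/2) * t k * r k" for k
  have \<sigma>pos: "\<sigma> k > 0" for k using h(1) unfolding \<sigma>_def by simp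
  define x where "x k = xbar + (t k *\<^sub>R d + \<sigma> k *\<^sub>R w)" for k
  define \<zeta> where "\<zeta> k = (g (xbar + (t k *\<^sub>R d + ((1/2) * t k * r k) *\<^sub>R w)) - g xbar - t k *\<^sub>R g' xbar d)
            /\<^sub>R ((1/2) * t k * r k)" for k
  have \<zeta>lim: "\<zeta> \<longlonglongrightarrow> g' xbar w + c *\<^sub>R g'' xbar d d"
    unfolding \<zeta>_def by (rule second_order_quotient_tendsto[OF g1 g2 h(1-4) tendsto_const])
  have gx: "g (x k) = g xbar + t k *\<^sub>R g' xbar d + \<sigma> k *\<^sub>R \<zeta> k" for k
    using \<sigma>pos[of k] h(1)[rule_format, of k] unfolding x_def \<zeta>_def \<sigma>_def by simp
  define C where "C = g -` K"
  have cont: "continuous_on UNIV g"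
    by (rule has_derivative_continuous_on) (use g1 has_derivative_at_withinI in blast)
  have Cc: "closed C" unfolding C_def by (rule closed_vimage[OF Kc cont])
  have Cne: "C \<noteq> {}" using xC unfolding C_def by blast
  have "\<forall>k. \<exists>c. c \<in> C \<and> infdist (x k) C = dist (x k) c"
    using infdist_attains_inf[OF Cc Cne] by metis
  then obtain cc where cc: "\<And>k. cc k \<in> C \<and> infdist (x k) C = dist (x k) (cc k)"
    by metis
  have p: "(\<lambda>k. d + (r k / 2) *\<^sub>R w) \<longlonglongrightarrow> d + (0/2) *\<^sub>R w"
    by (intro tendsto_intros h(3)) simp
  have ev: "eventually (\<lambda>k. t k *\<^sub>R (d + (r k / 2) *\<^sub>R w) \<in> dir_nbhd \<rho> \<delta> d) sequentially"
    using eventually_in_dir_nbhd[OF \<rho> _ h(2) p[simplified]] h(1) by blast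
  \<comment> \<open>Project the curve point \<open>x k\<close> onto \<open>C\<close> and read the projection in second-order
    coordinates; MSCQ bounds the displacement by \<open>\<kappa>\<close> times the residual \<open>\<sigma> k * D k\<close>.\<close>
  define D where "D k = norm (\<zeta> k - zz k)" for k
  define w' where "w' k = w + (cc k - x k) /\<^sub>R \<sigma> k" for k
  have w'C: "xbar + t k *\<^sub>R d + ((1/2) * t k * r k) *\<^sub>R w' k \<in> C" for k
  proof -
    have "xbar + t k *\<^sub>R d + ((1/2) * t k * r k) *\<^sub>R w' k = cc k"
      using \<sigma>pos[of k] h(1)[rule_format, of k] unfolding w'_def x_def \<sigma>_def by (simp add: algebra_simps)
    then show ?thesis using cc by simp
  qed
  have evb: "eventually (\<lambda>k. norm (w' k - w) \<le> \<kappa> * D k) sequentially"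
    using ev
  proof eventually_elim
    case (elim k)
    have eq: "t k *\<^sub>R (d + (r k / 2) *\<^sub>R w) = t k *\<^sub>R d + \<sigma> k *\<^sub>R w"
      unfolding \<sigma>_def by (simp add: algebra_simps)
    have "infdist (x k) C \<le> \<kappa> * infdist (g (x k)) K"
      using ms elim unfolding eq x_def C_def by blast
    also have "infdist (g (x k)) K \<le> dist (g (x k)) (g xbar + t k *\<^sub>R g' xbar d + \<sigma> k *\<^sub>R zz k)"
      by (rule infdist_le) (use h(6) in \<open>simp add: \<sigma>_def\<close>)
    also have "\<dots> = \<sigma> k * D k"
    proof -
      have "g (x k) - (g xbar + t k *\<^sub>R g' xbar d + \<sigma> k *\<^sub>R zz k) = \<sigma> k *\<^sub>R (\<zeta> k - zz k)"
        unfolding gx by (simp add: algebra_simps)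
      then show ?thesis unfolding dist_norm D_def using \<sigma>pos[of k] by simp
    qed
    finally have "dist (x k) (cc k) \<le> \<kappa> * (\<sigma> k * D k)"
      using cc[of k] \<kappa> by (simp add: mult_left_mono)
    moreover have "norm (w' k - w) = dist (x k) (cc k) / \<sigma> k"
      unfolding w'_def using \<sigma>pos[of k] by (simp add: dist_norm norm_minus_commute divide_inverse_commute)
    ultimately have "\<sigma> k * norm (w' k - w) \<le> \<sigma> k * (\<kappa> * D k)"
      using \<sigma>pos[of k] by (simp add: field_simps)
    then show ?case using \<sigma>pos[of k] by (simp add: mult_le_cancel_left_pos)
  qed
  then obtain N where hN: "\<forall>k\<ge>N. norm (w' k - w) \<le> \<kappa> * D k"
    unfolding eventually_sequentially by blast
  have Dlim: "D \<longlonglongrightarrow> norm (g' xbar w + c *\<^sub>R g'' xbar d d - z)"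
    unfolding D_def by (intro tendsto_intros \<zeta>lim h(5))
  obtain B where B: "B > 0" "\<forall>k. norm (D k) \<le> B"
    using convergent_imp_Bseq[of D] Dlim BseqE unfolding convergent_def by metis
  have "norm (w' k - w) \<le> \<kappa> * B" if "N \<le> k" for k
  proof -
    have "norm (w' k - w) \<le> \<kappa> * D k" using hN that by blast
    also have "\<dots> \<le> \<kappa> * B" using B(2)[rule_format, of k] \<kappa> by (simp add: mult_left_mono)
    finally show ?thesis .
  qed
  then obtain \<psi> wst where \<psi>: "strict_mono \<psi>" "\<And>k. N \<le> \<psi> k" and wlim: "(\<lambda>k. w' (\<psi> k)) \<longlonglongrightarrow> wst"
    using convergent_subseq_beyond by blast
  have "wst \<in> second_order_tangent c C xbar d"
    by (rule second_order_tangentI_subseq[OF h(1-4) \<psi>(1) wlim]) (use w'C in simp)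
  moreover have "norm (wst - w) \<le> \<kappa> * norm (g' xbar w + c *\<^sub>R g'' xbar d d - z)"
  proof (rule LIMSEQ_le)
    show "(\<lambda>k. norm (w' (\<psi> k) - w)) \<longlonglongrightarrow> norm (wst - w)" by (intro tendsto_intros wlim)
    show "(\<lambda>k. \<kappa> * D (\<psi> k)) \<longlonglongrightarrow> \<kappa> * norm (g' xbar w + c *\<^sub>R g'' xbar d d - z)"
      using LIMSEQ_subseq_LIMSEQ[OF Dlim \<psi>(1)] by (intro tendsto_intros) (simp add: comp_def)
    show "\<exists>M. \<forall>k\<ge>M. norm (w' (\<psi> k) - w) \<le> \<kappa> * D (\<psi> k)"
      using hN \<psi>(2) by blast
  qed
  ultimately show ?thesis unfolding C_def by blast
qed

lemma norm_add_square: "(norm (a + b))\<^sup>2 = (norm a)\<^sup>2 + 2 * (a \<bullet> b) + (norm (b::'a::real_inner))\<^sup>2"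
  by (simp add: power2_norm_eq_inner inner_add inner_commute algebra_simps)

lemma norm_add_scaleR_square:
  "(norm (v + s *\<^sub>R y))\<^sup>2 = (norm v)\<^sup>2 + 2 * s * (v \<bullet> y) + s\<^sup>2 * (norm (y::'a::real_inner))\<^sup>2"
  by (simp add: norm_add_square power_mult_distrib)

lemma regular_normal_coneI_quadratic:
  fixes S :: "'a::real_inner set"
  assumes pS: "p \<in> S" and r: "r > 0"
    and quad: "\<And>x. x \<in> S \<Longrightarrow> norm (x - p) < r \<Longrightarrow> \<xi> \<bullet> (x - p) \<le> M * (norm (x - p))\<^sup>2"
  shows "\<xi> \<in> regular_normal_cone S p"
  unfolding regular_normal_cone_def
proof (intro CollectI conjI pS allI impI)
  fix \<epsilon> :: real assume \<epsilon>: "\<epsilon> > 0"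
  show "\<exists>\<delta>>0. \<forall>x\<in>S. norm (x - p) < \<delta> \<longrightarrow> \<xi> \<bullet> (x - p) \<le> \<epsilon> * norm (x - p)"
  proof (intro exI[of _ "min r (\<epsilon> / (\<bar>M\<bar> + 1))"] conjI ballI impI)
    show "0 < min r (\<epsilon> / (\<bar>M\<bar> + 1))" using r \<epsilon> by simp
    fix x assume xS: "x \<in> S" and near: "norm (x - p) < min r (\<epsilon> / (\<bar>M\<bar> + 1))"
    have "M * (norm (x - p))\<^sup>2 \<le> \<bar>M\<bar> * (norm (x - p))\<^sup>2"
      by (intro mult_right_mono) auto
    then have "\<xi> \<bullet> (x - p) \<le> (\<bar>M\<bar> * norm (x - p)) * norm (x - p)"
      using quad[OF xS] near by (simp add: power2_eq_square mult.assoc)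
    also have "\<dots> \<le> \<epsilon> * norm (x - p)"
    proof (rule mult_right_mono)
      have "(\<bar>M\<bar> + 1) * norm (x - p) \<le> \<epsilon>"
        using near by (simp add: field_simps)
      then show "\<bar>M\<bar> * norm (x - p) \<le> \<epsilon>"
        using norm_ge_zero[of "x - p"] unfolding distrib_right by linarith
    qed simp
    finally show "\<xi> \<bullet> (x - p) \<le> \<epsilon> * norm (x - p)" .
  qed
qed

lemma directional_normal_coneI:
  assumes h: "\<forall>e>0. \<exists>t vs ls. t > 0 \<and> t < e \<and> norm (vs - v) < e \<and> norm (ls - \<xi>) < e
      \<and> ls \<in> regular_normal_cone K (y + t *\<^sub>R vs)"
  shows "\<xi> \<in> directional_normal_cone K y v"
proof -
  have ex: "\<forall>n. \<exists>t vs ls. t > 0 \<and> t < inverse (real (Suc n)) \<and> norm (vs - v) < inverse (real (Suc n))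
      \<and> norm (ls - \<xi>) < inverse (real (Suc n)) \<and> ls \<in> regular_normal_cone K (y + t *\<^sub>R vs)"
    using h by simp
  obtain T VS LS where H: "\<forall>n. T n > 0 \<and> T n < inverse (real (Suc n)) \<and> norm (VS n - v) < inverse (real (Suc n))
      \<and> norm (LS n - \<xi>) < inverse (real (Suc n)) \<and> LS n \<in> regular_normal_cone K (y + T n *\<^sub>R VS n)"
    using choice3[OF ex] by blast
  show ?thesis unfolding directional_normal_cone_def
  proof (intro CollectI exI conjI)
    show "\<forall>k. T k > 0" using H by blast
    show "T \<longlonglongrightarrow> 0"
    proof (rule LIMSEQ_zero_by_inverse_Suc)
      fix n show "norm (T n) \<le> inverse (real (Suc n))" using H[rule_format, of n] by simp
    qed
    show "VS \<longlonglongrightarrow> v" by (rule LIM_zero_cancel, rule LIMSEQ_zero_by_inverse_Suc) (use H in \<open>auto intro: less_imp_le\<close>)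
    show "LS \<longlonglongrightarrow> \<xi>" by (rule LIM_zero_cancel, rule LIMSEQ_zero_by_inverse_Suc) (use H in \<open>auto intro: less_imp_le\<close>)
    show "\<forall>k. LS k \<in> regular_normal_cone K (y + T k *\<^sub>R VS k)" using H by blast
  qed
qed

lemma directional_normal_cone_LIMSEQ:
  assumes l: "\<forall>n. l n \<in> directional_normal_cone K y v" and L: "l \<longlonglongrightarrow> L"
  shows "L \<in> directional_normal_cone K y v"
proof (rule directional_normal_coneI, intro allI impI)
  fix e :: real assume e: "e > 0"
  obtain n where n: "norm (l n - L) < e/2"
    using L e unfolding LIMSEQ_iff by (metis half_gt_zero le_refl)
  obtain t vs ls where h: "\<forall>k. t k > 0" "t \<longlonglongrightarrow> 0" "vs \<longlonglongrightarrow> v" "ls \<longlonglongrightarrow> l n"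
      "\<forall>k. ls k \<in> regular_normal_cone K (y + t k *\<^sub>R vs k)"
    using l unfolding directional_normal_cone_def by blast
  have "eventually (\<lambda>k. t k < e) sequentially" using order_tendstoD(2)[OF h(2)] e by blast
  moreover have "eventually (\<lambda>k. dist (vs k) v < e) sequentially" using h(3) e by (auto simp: tendsto_iff)
  moreover have "eventually (\<lambda>k. dist (ls k) (l n) < e/2) sequentially" using h(4)[unfolded tendsto_iff, rule_format, of "e/2"] e by simp
  ultimately have "eventually (\<lambda>k. t k < e \<and> dist (vs k) v < e \<and> dist (ls k) (l n) < e/2) sequentially"
    by eventually_elim simp
  then obtain k where k: "t k < e" "dist (vs k) v < e" "dist (ls k) (l n) < e/2"
    using eventually_happens'[OF trivial_limit_sequentially] by blast
  have "norm (ls k - L) < e"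
    using norm_triangle_ineq[of "ls k - l n" "l n - L"] k(3) n by (simp add: dist_norm)
  then show "\<exists>t vs ls. t > 0 \<and> t < e \<and> norm (vs - v) < e \<and> norm (ls - L) < e
      \<and> ls \<in> regular_normal_cone K (y + t *\<^sub>R vs)"
    using h(1,5) k by (intro exI[of _ "t k"] exI[of _ "vs k"] exI[of _ "ls k"]) (simp add: dist_norm)
qed

lemma regular_normal_of_scaled_min:
  fixes K :: "'b::real_inner set"
  assumes \<sigma>: "\<sigma> > 0" and \<rho>: "\<rho> > 0"
    and uz: "norm (u - z) < \<rho>/2"
    and pK: "y0 + \<sigma> *\<^sub>R u \<in> K"
    and mn: "\<forall>u'. y0 + \<sigma> *\<^sub>R u' \<in> K \<longrightarrow> norm (u' - z) \<le> \<rho> \<longrightarrow>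
       - (\<xi> \<bullet> u) + M * (norm (u - z))\<^sup>2 \<le> - (\<xi> \<bullet> u') + M * (norm (u' - z))\<^sup>2"
  shows "\<xi> - (2*M) *\<^sub>R (u - z) \<in> regular_normal_cone K (y0 + \<sigma> *\<^sub>R u)"
proof (rule regular_normal_coneI_quadratic[OF pK, of "\<sigma> * (\<rho>/2)" _ "M / \<sigma>"])
  show "0 < \<sigma> * (\<rho>/2)" using \<sigma> \<rho> by simp
  fix x assume xK: "x \<in> K" and near: "norm (x - (y0 + \<sigma> *\<^sub>R u)) < \<sigma> * (\<rho>/2)"
  define u' where "u' = u + (x - (y0 + \<sigma> *\<^sub>R u)) /\<^sub>R \<sigma>"
  have x_eq: "x - (y0 + \<sigma> *\<^sub>R u) = \<sigma> *\<^sub>R (u' - u)" unfolding u'_def using \<sigma> by simp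
  have "y0 + \<sigma> *\<^sub>R u' = x" using x_eq by (simp add: algebra_simps)
  moreover have "\<sigma> * norm (u' - u) < \<sigma> * (\<rho>/2)" using near \<sigma> unfolding x_eq by simp
  then have "norm (u' - u) < \<rho>/2" using \<sigma> by simp
  then have "norm (u' - z) \<le> \<rho>"
    using norm_triangle_ineq[of "u' - u" "u - z"] uz by simp
  ultimately have "- (\<xi> \<bullet> u) + M * (norm (u - z))\<^sup>2 \<le> - (\<xi> \<bullet> u') + M * (norm (u' - z))\<^sup>2"
    using mn xK by blast
  moreover have "(norm (u' - z))\<^sup>2 = (norm (u - z))\<^sup>2 + 2 * ((u - z) \<bullet> (u' - u)) + (norm (u' - u))\<^sup>2"
    using norm_add_square[of "u - z" "u' - u"] by simp
  ultimately have "(\<xi> - (2*M) *\<^sub>R (u - z)) \<bullet> (u' - u) \<le> M * (norm (u' - u))\<^sup>2"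
    by (simp add: inner_diff_left inner_diff_right algebra_simps)
  then have "\<sigma> * ((\<xi> - (2*M) *\<^sub>R (u - z)) \<bullet> (u' - u)) \<le> \<sigma> * (M * (norm (u' - u))\<^sup>2)"
    using \<sigma> by (intro mult_left_mono) auto
  moreover have "(norm (x - (y0 + \<sigma> *\<^sub>R u)))\<^sup>2 = \<sigma>\<^sup>2 * (norm (u' - u))\<^sup>2"
    unfolding x_eq using \<sigma> by (simp add: power_mult_distrib)
  ultimately show "(\<xi> - (2*M) *\<^sub>R (u - z)) \<bullet> (x - (y0 + \<sigma> *\<^sub>R u))
      \<le> M / \<sigma> * (norm (x - (y0 + \<sigma> *\<^sub>R u)))\<^sup>2"
    unfolding x_eq using \<sigma> by (simp add: power2_eq_square)
qed

lemma second_order_tangent_localized_minimizers: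
  fixes K :: "'b::euclidean_space set" and \<psi> :: "'b \<Rightarrow> real"
  assumes Kc: "closed K" and \<rho>: "\<rho> > 0" and cont: "continuous_on UNIV \<psi>"
    and h: "\<forall>k. t k > 0 \<and> r k > 0" "t \<longlonglongrightarrow> 0" "r \<longlonglongrightarrow> 0" "(\<lambda>k. t k / r k) \<longlonglongrightarrow> c" "zz \<longlonglongrightarrow> z"
      "\<forall>k. y + t k *\<^sub>R v + ((1/2) * t k * r k) *\<^sub>R zz k \<in> K"
  shows "\<exists>ch uu us. strict_mono ch
    \<and> (\<forall>k. y + t (ch k) *\<^sub>R v + ((1/2) * t (ch k) * r (ch k)) *\<^sub>R uu k \<in> K)
    \<and> (\<forall>k u'. y + t (ch k) *\<^sub>R v + ((1/2) * t (ch k) * r (ch k)) *\<^sub>R u' \<in> K \<longrightarrow>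
         norm (u' - z) \<le> \<rho> \<longrightarrow> \<psi> (uu k) \<le> \<psi> u')
    \<and> uu \<longlonglongrightarrow> us \<and> us \<in> second_order_tangent c K y v \<and> norm (us - z) \<le> \<rho> \<and> \<psi> us \<le> \<psi> z"
proof -
  define D where "D k = {u. y + t k *\<^sub>R v + ((1/2) * t k * r k) *\<^sub>R u \<in> K} \<inter> cball z \<rho>" for k
  have Dcomp: "compact (D k)" for k
  proof -
    have "closed ((\<lambda>u. y + t k *\<^sub>R v + ((1/2) * t k * r k) *\<^sub>R u) -` K)"
      by (rule closed_vimage[OF Kc]) (intro continuous_intros)
    then show ?thesis unfolding D_def vimage_def
      by (subst Int_commute) (intro compact_Int_closed compact_cball)
  qed
  obtain N0 where N0: "\<forall>k\<ge>N0. norm (zz k - z) < \<rho>"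
    using h(5) \<rho> unfolding LIMSEQ_iff by blast
  have zzD: "zz k \<in> D k" if "k \<ge> N0" for k
    using N0 that h(6) unfolding D_def by (simp add: dist_norm norm_minus_commute less_imp_le)
  have "\<exists>u. N0 \<le> k \<longrightarrow> u \<in> D k \<and> (\<forall>u'\<in>D k. \<psi> u \<le> \<psi> u')" for k
  proof (cases "N0 \<le> k")
    case True
    then have "D k \<noteq> {}" using zzD by blast
    then show ?thesis
      using continuous_attains_inf[OF Dcomp _ continuous_on_subset[OF cont]] by blast
  qed simp
  then obtain uu where uu: "\<And>k. N0 \<le> k \<Longrightarrow> uu k \<in> D k \<and> (\<forall>u'\<in>D k. \<psi> (uu k) \<le> \<psi> u')"
    by metis
  have "norm (uu k - z) \<le> \<rho>" if "N0 \<le> k" for k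
    using uu[OF that] unfolding D_def by (simp add: dist_norm norm_minus_commute)
  then obtain ch us where ch: "strict_mono ch" "\<And>k. N0 \<le> ch k" and ulim: "(\<lambda>k. uu (ch k)) \<longlonglongrightarrow> us"
    using convergent_subseq_beyond by blast
  have uD: "uu (ch k) \<in> D (ch k)" for k using uu[OF ch(2)] by blast
  have "us \<in> second_order_tangent c K y v"
    by (rule second_order_tangentI_subseq[OF h(1-4) ch(1) ulim]) (use uD in \<open>simp add: D_def\<close>)
  moreover have "norm (us - z) \<le> \<rho>"
  proof (rule LIMSEQ_le_const2)
    show "(\<lambda>k. norm (uu (ch k) - z)) \<longlonglongrightarrow> norm (us - z)" by (intro tendsto_intros ulim)
    show "\<exists>N. \<forall>n\<ge>N. norm (uu (ch n) - z) \<le> \<rho>"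
      using uD unfolding D_def by (auto simp: dist_norm norm_minus_commute)
  qed
  moreover have "\<psi> us \<le> \<psi> z"
  proof (rule LIMSEQ_le)
    show "(\<lambda>k. \<psi> (uu (ch k))) \<longlonglongrightarrow> \<psi> us"
      using continuous_on_tendsto_compose[OF cont ulim] by simp
    show "(\<lambda>k. \<psi> (zz (ch k))) \<longlonglongrightarrow> \<psi> z"
      using continuous_on_tendsto_compose[OF cont LIMSEQ_subseq_LIMSEQ[OF h(5) ch(1)]]
      by (simp add: comp_def)
    show "\<exists>N. \<forall>n\<ge>N. \<psi> (uu (ch n)) \<le> \<psi> (zz (ch n))"
      using uu[OF ch(2)] zzD[OF ch(2)] by blast
  qed
  moreover have "\<psi> (uu (ch k)) \<le> \<psi> u'"
    if "y + t (ch k) *\<^sub>R v + ((1/2) * t (ch k) * r (ch k)) *\<^sub>R u' \<in> K" "norm (u' - z) \<le> \<rho>" for k u'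
  proof -
    have "u' \<in> D (ch k)" using that unfolding D_def by (simp add: dist_norm norm_minus_commute)
    then show ?thesis using uu[OF ch(2)] by blast
  qed
  ultimately show ?thesis using ch(1) uD ulim unfolding D_def
    by (intro exI[of _ ch] exI[of _ "\<lambda>k. uu (ch k)"] exI[of _ us]) auto
qed

lemma regular_normal_second_order_tangent_directional:
  fixes K :: "'b::euclidean_space set"
  assumes Kc: "closed K" and xi: "\<xi> \<in> regular_normal_cone (second_order_tangent c K y v) z"
  shows "\<xi> \<in> directional_normal_cone K y v"
proof (rule directional_normal_coneI, intro allI impI)
  fix e :: real assume e: "e > 0"
  define \<epsilon> where "\<epsilon> = e/8"
  have \<epsilon>: "\<epsilon> > 0" unfolding \<epsilon>_def using e by simp
  obtain \<delta>0 where \<delta>0: "\<delta>0 > 0" "\<forall>u\<in>second_order_tangent c K y v. norm (u - z) < \<delta>0 \<longrightarrow> \<xi> \<bullet> (u - z) \<le> \<epsilon> * norm (u - z)"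
    using xi \<epsilon> unfolding regular_normal_cone_def mem_Collect_eq by (elim conjE allE[of _ \<epsilon>]) blast
  define \<rho> where "\<rho> = \<delta>0/2"
  have \<rho>: "\<rho> > 0" unfolding \<rho>_def using \<delta>0 by simp
  define M where "M = 1 + 4*\<epsilon>/\<rho>"
  have M: "M > 0" unfolding M_def using \<epsilon> \<rho> by (simp add: add_pos_nonneg)
  have \<epsilon>M: "\<epsilon>/M < \<rho>/4"
  proof -
    have "4 * \<epsilon> < \<rho> * M" unfolding M_def using \<rho> by (simp add: algebra_simps)
    then show ?thesis using M by (simp add: divide_less_eq field_simps)
  qed
  obtain t r zz where h: "\<forall>k. t k > 0 \<and> r k > 0" "t \<longlonglongrightarrow> 0" "r \<longlonglongrightarrow> 0"
      "(\<lambda>k. t k / r k) \<longlonglongrightarrow> c" "zz \<longlonglongrightarrow> z"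
      "\<forall>k. y + t k *\<^sub>R v + ((1/2) * t k * r k) *\<^sub>R zz k \<in> K"
    using xi unfolding regular_normal_cone_def mem_Collect_eq second_order_tangent_def by (elim conjE exE) blast
  define \<sigma> where "\<sigma> k = (1/2) * t k * r k" for k
  have \<sigma>pos: "\<sigma> k > 0" for k using h(1) unfolding \<sigma>_def by simp
  \<comment> \<open>Minimizing \<open>\<psi>\<close> over the slices \<open>{u. y + t v + \<sigma> u \<in> K}\<close> yields, by Fermat's rule,
    regular normals to \<open>K\<close> at points \<open>y + t (v + (r/2) u)\<close> whose direction tends to \<open>v\<close>.\<close>
  define \<psi> where "\<psi> u = - (\<xi> \<bullet> u) + M * (norm (u - z))\<^sup>2" for u
  have "continuous_on UNIV \<psi>" unfolding \<psi>_def by (intro continuous_intros)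
  from second_order_tangent_localized_minimizers[OF Kc \<rho> this h]
  obtain ch uu us where ch: "strict_mono ch"
    and uuK: "\<forall>k. y + t (ch k) *\<^sub>R v + ((1/2) * t (ch k) * r (ch k)) *\<^sub>R uu k \<in> K"
    and uu_min: "\<forall>k u'. y + t (ch k) *\<^sub>R v + ((1/2) * t (ch k) * r (ch k)) *\<^sub>R u' \<in> K \<longrightarrow>
         norm (u' - z) \<le> \<rho> \<longrightarrow> \<psi> (uu k) \<le> \<psi> u'"
    and ulim: "uu \<longlonglongrightarrow> us" and usU: "us \<in> second_order_tangent c K y v"
    and usz: "norm (us - z) \<le> \<rho>" and \<psi>us: "\<psi> us \<le> \<psi> z"
    by blast
  have uu: "y + t (ch k) *\<^sub>R v + \<sigma> (ch k) *\<^sub>R uu k \<in> K" for k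
    using uuK unfolding \<sigma>_def by blast
  have uumin: "\<psi> (uu k) \<le> \<psi> u'"
    if "y + t (ch k) *\<^sub>R v + \<sigma> (ch k) *\<^sub>R u' \<in> K" "norm (u' - z) \<le> \<rho>" for k u'
    using uu_min that unfolding \<sigma>_def by blast
  \<comment> \<open>The limit \<open>us\<close> is a tangent vector, so the regularity of \<open>\<xi>\<close> pins it near \<open>z\<close>.\<close>
  have "M * (norm (us - z))\<^sup>2 \<le> \<xi> \<bullet> (us - z)" using \<psi>us unfolding \<psi>_def by (simp add: inner_diff_right)
  also have "\<dots> \<le> \<epsilon> * norm (us - z)" using \<delta>0(2) usU usz \<rho>_def \<delta>0(1) by auto
  finally have sq: "M * (norm (us - z))\<^sup>2 \<le> \<epsilon> * norm (us - z)" .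
  have usz2: "norm (us - z) \<le> \<epsilon>/M"
  proof (cases "norm (us - z) = 0")
    case False
    then have "M * norm (us - z) \<le> \<epsilon>" using sq by (simp add: power2_eq_square)
    then show ?thesis using M by (simp add: field_simps)
  qed (use \<epsilon> M in simp)
  have E1: "eventually (\<lambda>k. dist (uu k) us < \<epsilon>/M) sequentially"
    using ulim[unfolded tendsto_iff, rule_format, of "\<epsilon>/M"] \<epsilon> M by simp
  have E2: "eventually (\<lambda>k. t (ch k) < e) sequentially"
    using order_tendstoD(2)[OF LIMSEQ_subseq_LIMSEQ[OF h(2) ch, unfolded comp_def] e] .
  have "(\<lambda>k. (r (ch k) / 2) *\<^sub>R uu k) \<longlonglongrightarrow> (0/2) *\<^sub>R us"
    by (intro tendsto_intros ulim LIMSEQ_subseq_LIMSEQ[OF h(3) ch, unfolded comp_def]) simp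
  then have E3: "eventually (\<lambda>k. norm ((r (ch k) / 2) *\<^sub>R uu k) < e) sequentially"
    using e unfolding tendsto_iff dist_norm by simp
  from E1 E2 E3 have "eventually (\<lambda>k. dist (uu k) us < \<epsilon>/M \<and> t (ch k) < e
      \<and> norm ((r (ch k) / 2) *\<^sub>R uu k) < e) sequentially"
    by eventually_elim simp
  then obtain k where k: "dist (uu k) us < \<epsilon>/M" "t (ch k) < e"
      "norm ((r (ch k) / 2) *\<^sub>R uu k) < e"
    using eventually_happens'[OF trivial_limit_sequentially] by blast
  define u where "u = uu k"
  have uz: "norm (u - z) < 2 * \<epsilon> / M"
    using norm_triangle_ineq[of "u - us" "us - z"] k(1) usz2 unfolding u_def dist_norm by simp
  have "2 * \<epsilon> / M = 2 * (\<epsilon> / M)" by simp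
  then have uz2: "norm (u - z) < \<rho>/2" using uz \<epsilon>M by linarith
  have reg: "\<xi> - (2*M) *\<^sub>R (u - z) \<in> regular_normal_cone K ((y + t (ch k) *\<^sub>R v) + \<sigma> (ch k) *\<^sub>R u)"
  proof (rule regular_normal_of_scaled_min[OF \<sigma>pos \<rho> uz2])
    show "y + t (ch k) *\<^sub>R v + \<sigma> (ch k) *\<^sub>R u \<in> K" using uu unfolding u_def by simp
    show "\<forall>u'. y + t (ch k) *\<^sub>R v + \<sigma> (ch k) *\<^sub>R u' \<in> K \<longrightarrow> norm (u' - z) \<le> \<rho> \<longrightarrow>
       - (\<xi> \<bullet> u) + M * (norm (u - z))\<^sup>2 \<le> - (\<xi> \<bullet> u') + M * (norm (u' - z))\<^sup>2"
    proof (intro allI impI)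
      fix u' assume "y + t (ch k) *\<^sub>R v + \<sigma> (ch k) *\<^sub>R u' \<in> K" "norm (u' - z) \<le> \<rho>"
      from uumin[OF this] show "- (\<xi> \<bullet> u) + M * (norm (u - z))\<^sup>2 \<le> - (\<xi> \<bullet> u') + M * (norm (u' - z))\<^sup>2"
        unfolding u_def \<psi>_def .
    qed
  qed
  have "norm ((\<xi> - (2*M) *\<^sub>R (u - z)) - \<xi>) = 2 * M * norm (u - z)" using M by simp
  also have "\<dots> < 2 * M * (2 * \<epsilon> / M)" using uz M by (intro mult_strict_left_mono) auto
  also have "\<dots> < e" unfolding \<epsilon>_def using M e by simp
  finally have ls: "norm ((\<xi> - (2*M) *\<^sub>R (u - z)) - \<xi>) < e" .
  have pt: "y + t (ch k) *\<^sub>R (v + (r (ch k) / 2) *\<^sub>R u) = (y + t (ch k) *\<^sub>R v) + \<sigma> (ch k) *\<^sub>R u"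
    unfolding \<sigma>_def by (simp add: algebra_simps)
  show "\<exists>t vs ls. t > 0 \<and> t < e \<and> norm (vs - v) < e \<and> norm (ls - \<xi>) < e
      \<and> ls \<in> regular_normal_cone K (y + t *\<^sub>R vs)"
  proof (intro exI conjI)
    show "t (ch k) > 0" using h(1) by simp
    show "t (ch k) < e" by (rule k(2))
    show "norm ((v + (r (ch k) / 2) *\<^sub>R u) - v) < e" using k(3) unfolding u_def by simp
    show "norm ((\<xi> - (2*M) *\<^sub>R (u - z)) - \<xi>) < e" by (rule ls)
    show "\<xi> - (2*M) *\<^sub>R (u - z) \<in> regular_normal_cone K (y + t (ch k) *\<^sub>R (v + (r (ch k) / 2) *\<^sub>R u))"
      unfolding pt by (rule reg)
  qed
qed

lemma limiting_normal_second_order_tangent_directional: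
  fixes K :: "'b::euclidean_space set"
  assumes Kc: "closed K" and l: "l \<in> limiting_normal_cone (second_order_tangent c K y v) p"
  shows "l \<in> directional_normal_cone K y v"
proof -
  obtain ys ls where h: "ys \<longlonglongrightarrow> p" "ls \<longlonglongrightarrow> l" "\<forall>k. ys k \<in> second_order_tangent c K y v \<and> ls k \<in> regular_normal_cone (second_order_tangent c K y v) (ys k)"
    using l unfolding limiting_normal_cone_def by blast
  have "\<forall>k. ls k \<in> directional_normal_cone K y v" using h(3) regular_normal_second_order_tangent_directional[OF Kc] by blast
  then show ?thesis using directional_normal_cone_LIMSEQ h(2) by blast
qed

lemma limiting_normal_of_approximate_normals:
  fixes T :: "'b::euclidean_space set" and A :: "'a::real_normed_vector \<Rightarrow> 'b" and a :: "'a \<Rightarrow> real"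
  assumes h: "\<forall>\<eta>>0. \<exists>z\<in>T. norm (z - p) < \<eta> \<and> (\<exists>l\<in>regular_normal_cone T z. norm l \<le> M
      \<and> (\<forall>u. \<bar>a u + l \<bullet> A u\<bar> \<le> (c0 + \<eta>) * norm u))"
  shows "\<exists>l\<in>limiting_normal_cone T p. norm l \<le> M \<and> (\<forall>u. \<bar>a u + l \<bullet> A u\<bar> \<le> c0 * norm u)"
proof -
  have ex: "\<forall>n. \<exists>z l. z \<in> T \<and> norm (z - p) < inverse (real (Suc n)) \<and> l \<in> regular_normal_cone T z
      \<and> norm l \<le> M \<and> (\<forall>u. \<bar>a u + l \<bullet> A u\<bar> \<le> (c0 + inverse (real (Suc n))) * norm u)"
  proof
    fix n :: nat
    have pos: "inverse (real (Suc n)) > 0" by simp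
    show "\<exists>z l. z \<in> T \<and> norm (z - p) < inverse (real (Suc n)) \<and> l \<in> regular_normal_cone T z
      \<and> norm l \<le> M \<and> (\<forall>u. \<bar>a u + l \<bullet> A u\<bar> \<le> (c0 + inverse (real (Suc n))) * norm u)"
      using h[rule_format, OF pos] by fast
  qed
  obtain Z L where H: "\<forall>n. Z n \<in> T \<and> norm (Z n - p) < inverse (real (Suc n))
      \<and> L n \<in> regular_normal_cone T (Z n) \<and> norm (L n) \<le> M
      \<and> (\<forall>u. \<bar>a u + L n \<bullet> A u\<bar> \<le> (c0 + inverse (real (Suc n))) * norm u)"
    using choice2[OF ex] by blast
  have "bounded (range L)" unfolding bounded_iff using H by blast
  then obtain l \<phi> where \<phi>: "strict_mono \<phi>" "(L \<circ> \<phi>) \<longlonglongrightarrow> l"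
    using bounded_imp_convergent_subsequence by blast
  have inv\<phi>: "(\<lambda>n. inverse (real (Suc (\<phi> n)))) \<longlonglongrightarrow> 0"
    using LIMSEQ_subseq_LIMSEQ[OF LIMSEQ_inverse_real_of_nat \<phi>(1)] by (simp add: comp_def)
  have Zlim: "(\<lambda>n. Z (\<phi> n)) \<longlonglongrightarrow> p"
  proof (rule LIM_zero_cancel, rule Lim_null_comparison[OF _ inv\<phi>])
    show "\<forall>\<^sub>F n in sequentially. norm (Z (\<phi> n) - p) \<le> inverse (real (Suc (\<phi> n)))"
    proof (intro always_eventually allI)
      fix n show "norm (Z (\<phi> n) - p) \<le> inverse (real (Suc (\<phi> n)))"
        using H[rule_format, of "\<phi> n"] by (simp add: less_imp_le)
    qed
  qed
  have Llim: "(\<lambda>n. L (\<phi> n)) \<longlonglongrightarrow> l" using \<phi>(2) by (simp add: comp_def)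
  have "l \<in> limiting_normal_cone T p"
    unfolding limiting_normal_cone_def using Zlim Llim H by blast
  moreover have "norm l \<le> M"
    by (rule LIMSEQ_le_const2[OF tendsto_norm[OF Llim]]) (use H in blast)
  moreover have "\<bar>a u + l \<bullet> A u\<bar> \<le> (c0 + 0) * norm u" for u
  proof (rule LIMSEQ_le)
    show "(\<lambda>n. \<bar>a u + L (\<phi> n) \<bullet> A u\<bar>) \<longlonglongrightarrow> \<bar>a u + l \<bullet> A u\<bar>" by (intro tendsto_intros Llim)
    show "(\<lambda>n. (c0 + inverse (real (Suc (\<phi> n)))) * norm u) \<longlonglongrightarrow> (c0 + 0) * norm u"
      by (intro tendsto_intros inv\<phi>)
    show "\<exists>N. \<forall>n\<ge>N. \<bar>a u + L (\<phi> n) \<bullet> A u\<bar> \<le> (c0 + inverse (real (Suc (\<phi> n)))) * norm u"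
      using H by blast
  qed
  ultimately show ?thesis by auto
qed

lemma nonneg_of_nonneg_quadratic_near_zero:
  fixes G Q :: real
  assumes s0: "s0 > 0" and h: "\<forall>s. 0 < s \<and> s < s0 \<longrightarrow> 0 \<le> s * G + s\<^sup>2 * Q"
  shows "G \<ge> 0"
proof (rule ccontr)
  assume "\<not> G \<ge> 0"
  then have G: "G < 0" by simp
  define s where "s = min (s0/2) (- G / (2 * (\<bar>Q\<bar> + 1)))"
  have gq: "- G / (2 * (\<bar>Q\<bar> + 1)) > 0" using G by (intro divide_pos_pos) auto
  have s: "0 < s" "s < s0" unfolding s_def using s0 gq by auto
  have "s * \<bar>Q\<bar> \<le> (- G / (2 * (\<bar>Q\<bar> + 1))) * \<bar>Q\<bar>" unfolding s_def by (intro mult_right_mono) auto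
  also have "\<dots> \<le> - G / 2"
  proof -
    have "(- G / (2 * (\<bar>Q\<bar> + 1))) * \<bar>Q\<bar> = (-G/2) * (\<bar>Q\<bar> / (\<bar>Q\<bar> + 1))" by (simp add: field_simps)
    also have "\<dots> \<le> (-G/2) * 1" using G by (intro mult_left_mono) auto
    finally show ?thesis by simp
  qed
  finally have "s * \<bar>Q\<bar> \<le> - G / 2" .
  moreover have "s * Q \<le> s * \<bar>Q\<bar>" using s(1) by (intro mult_left_mono) auto
  ultimately have "G + s * Q < 0" using G by linarith
  then have "s * (G + s * Q) < 0" using s(1) by (simp add: mult_pos_neg)
  moreover have "0 \<le> s * G + s\<^sup>2 * Q" using h s by blast
  ultimately show False by (simp add: power2_eq_square algebra_simps)
qed

lemma exists_small_sqrt_bound: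
  fixes c1 c2 \<zeta> :: real
  assumes "c1 \<ge> 0" "c2 \<ge> 0" "\<zeta> > 0"
  shows "\<exists>\<theta>>0. \<forall>D. 0 \<le> D \<and> D \<le> \<theta> \<longrightarrow> c1 * D + sqrt (c2 * D) \<le> \<zeta> \<and> D \<le> \<zeta>"
proof (intro exI[of _ "min \<zeta> (min (\<zeta> / (2*c1+1)) (\<zeta>\<^sup>2 / (4*c2+1)))"] conjI allI impI)
  show "0 < min \<zeta> (min (\<zeta> / (2*c1+1)) (\<zeta>\<^sup>2 / (4*c2+1)))" using assms by simp
  fix D assume D: "0 \<le> D \<and> D \<le> min \<zeta> (min (\<zeta> / (2*c1+1)) (\<zeta>\<^sup>2 / (4*c2+1)))"
  show "D \<le> \<zeta>" using D by simp
  have a: "c1 * D \<le> \<zeta>/2"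
  proof -
    have "c1 * D \<le> c1 * (\<zeta> / (2*c1+1))" using D assms by (intro mult_left_mono) auto
    also have "\<dots> \<le> \<zeta>/2" using assms by (simp add: field_simps)
    finally show ?thesis .
  qed
  have b: "sqrt (c2 * D) \<le> \<zeta>/2"
  proof -
    have "c2 * D \<le> c2 * (\<zeta>\<^sup>2 / (4*c2+1))" using D assms by (intro mult_left_mono) auto
    also have "\<dots> \<le> (\<zeta>/2)\<^sup>2" using assms by (simp add: field_simps power2_eq_square)
    finally show ?thesis using assms by (intro real_le_lsqrt) auto
  qed
  show "c1 * D + sqrt (c2 * D) \<le> \<zeta>" using a b by simp
qed

lemma abs_norm_square_diff_le:
  fixes p q :: "'a::real_normed_vector"
  shows "\<bar>(norm p)\<^sup>2 - (norm q)\<^sup>2\<bar> \<le> norm (p - q) * (norm p + norm q)"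
proof -
  have e1: "(norm p)\<^sup>2 - (norm q)\<^sup>2 = (norm p - norm q) * (norm p + norm q)"
    by (simp add: power2_eq_square algebra_simps)
  have "\<bar>(norm p)\<^sup>2 - (norm q)\<^sup>2\<bar> = \<bar>norm p - norm q\<bar> * (norm p + norm q)"
    unfolding e1 abs_mult by simp
  also have "\<dots> \<le> norm (p - q) * (norm p + norm q)"
    by (intro mult_right_mono norm_triangle_ineq3) simp
  finally show ?thesis .
qed

lemma blinfun_le_norm:
  fixes a :: "'a::real_normed_vector \<Rightarrow>\<^sub>L real"
  shows "a x \<le> norm a * norm x"
  using norm_blinfun[of a x] by simp

lemma exists_proximal_min:
  fixes W :: "'a::euclidean_space set" and a :: "'a \<Rightarrow>\<^sub>L real"
  assumes Wc: "closed W" and w0: "w0 \<in> W" and \<epsilon>: "\<epsilon> > 0"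
  shows "\<exists>wt\<in>W. \<forall>w\<in>W. a wt + \<epsilon> * (norm (wt - w0))\<^sup>2 \<le> a w + \<epsilon> * (norm (w - w0))\<^sup>2"
proof -
  define R where "R = norm a / \<epsilon> + 1"
  define \<Phi> where "\<Phi> w = a w + \<epsilon> * (norm (w - w0))\<^sup>2" for w
  have Sc: "compact (cball w0 R \<inter> W)" by (intro compact_Int_closed compact_cball Wc)
  have "R \<ge> 0" unfolding R_def using \<epsilon> by simp
  then have Sne: "cball w0 R \<inter> W \<noteq> {}" using w0 by (metis IntI centre_in_cball empty_iff)
  have cont: "continuous_on (cball w0 R \<inter> W) \<Phi>" unfolding \<Phi>_def by (intro continuous_intros)
  obtain wt where wt: "wt \<in> cball w0 R \<inter> W" "\<forall>y\<in>cball w0 R \<inter> W. \<Phi> wt \<le> \<Phi> y"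
    using continuous_attains_inf[OF Sc Sne cont] by blast
  have "\<Phi> wt \<le> \<Phi> w" if wW: "w \<in> W" for w
  proof (cases "w \<in> cball w0 R")
    case True then show ?thesis using wt wW by blast
  next
    case False
    then have big: "norm (w - w0) > R" by (simp add: dist_norm norm_minus_commute)
    have "\<Phi> wt \<le> \<Phi> w0" using wt w0 \<epsilon> by (simp add: R_def)
    also have "\<Phi> w0 = a w0" unfolding \<Phi>_def by simp
    also have "a w0 \<le> a w + \<epsilon> * (norm (w - w0))\<^sup>2"
    proof -
      have "a (w0 - w) \<le> norm a * norm (w - w0)" using blinfun_le_norm[of a "w0 - w"] by (simp add: norm_minus_commute)
      also have "\<dots> \<le> (\<epsilon> * norm (w - w0)) * norm (w - w0)"
      proof (rule mult_right_mono)
        have "norm a < \<epsilon> * R" unfolding R_def using \<epsilon> by (simp add: field_simps)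
        also have "\<dots> < \<epsilon> * norm (w - w0)" using big \<epsilon> by simp
        finally show "norm a \<le> \<epsilon> * norm (w - w0)" by simp
      qed simp
      finally show ?thesis by (simp add: blinfun.diff_right power2_eq_square algebra_simps)
    qed
    finally show ?thesis unfolding \<Phi>_def by simp
  qed
  then show ?thesis using wt unfolding \<Phi>_def by blast
qed

lemma proximal_objective_lipschitz:
  fixes a :: "'a::real_normed_vector \<Rightarrow>\<^sub>L real"
  assumes \<epsilon>: "\<epsilon> > 0" and w1: "norm (w1 - wt) \<le> 2" and w2: "norm (w2 - wt) \<le> 2"
  shows "(a w1 + \<epsilon> * (norm (w1 - w0))\<^sup>2 + \<epsilon> * (norm (w1 - wt))\<^sup>2)
       - (a w2 + \<epsilon> * (norm (w2 - w0))\<^sup>2 + \<epsilon> * (norm (w2 - wt))\<^sup>2)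
       \<le> (norm a + 2 * \<epsilon> * norm (wt - w0) + 8 * \<epsilon>) * norm (w1 - w2)"
proof -
  have A: "a w1 - a w2 \<le> norm a * norm (w1 - w2)"
    using blinfun_le_norm[of a "w1 - w2"] by (simp add: blinfun.diff_right)
  have n1: "norm (w1 - w0) \<le> 2 + norm (wt - w0)"
    using norm_triangle_ineq[of "w1 - wt" "wt - w0"] w1 by simp
  have n2: "norm (w2 - w0) \<le> 2 + norm (wt - w0)"
    using norm_triangle_ineq[of "w2 - wt" "wt - w0"] w2 by simp
  have B: "(norm (w1 - w0))\<^sup>2 - (norm (w2 - w0))\<^sup>2 \<le> norm (w1 - w2) * (4 + 2 * norm (wt - w0))"
  proof -
    have "(norm (w1 - w0))\<^sup>2 - (norm (w2 - w0))\<^sup>2 \<le> norm (w1 - w2) * (norm (w1 - w0) + norm (w2 - w0))"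
      using abs_norm_square_diff_le[of "w1 - w0" "w2 - w0"] by simp
    also have "\<dots> \<le> norm (w1 - w2) * (4 + 2 * norm (wt - w0))"
      using n1 n2 by (intro mult_left_mono) auto
    finally show ?thesis .
  qed
  have C: "(norm (w1 - wt))\<^sup>2 - (norm (w2 - wt))\<^sup>2 \<le> norm (w1 - w2) * 4"
  proof -
    have "(norm (w1 - wt))\<^sup>2 - (norm (w2 - wt))\<^sup>2 \<le> norm (w1 - w2) * (norm (w1 - wt) + norm (w2 - wt))"
      using abs_norm_square_diff_le[of "w1 - wt" "w2 - wt"] by simp
    also have "\<dots> \<le> norm (w1 - w2) * 4"
      using w1 w2 by (intro mult_left_mono) auto
    finally show ?thesis .
  qed
  have "\<epsilon> * ((norm (w1 - w0))\<^sup>2 - (norm (w2 - w0))\<^sup>2) \<le> \<epsilon> * (norm (w1 - w2) * (4 + 2 * norm (wt - w0)))"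
    using B \<epsilon> by (intro mult_left_mono) auto
  moreover have "\<epsilon> * ((norm (w1 - wt))\<^sup>2 - (norm (w2 - wt))\<^sup>2) \<le> \<epsilon> * (norm (w1 - w2) * 4)"
    using C \<epsilon> by (intro mult_left_mono) auto
  ultimately show ?thesis using A by (simp add: algebra_simps)
qed

lemma local_min_penalty_gradient:
  fixes a :: "'a::real_inner \<Rightarrow>\<^sub>L real" and A :: "'a \<Rightarrow>\<^sub>L 'b::real_inner"
    and \<epsilon> j :: real and w0 w1 :: 'a and e z :: 'b
  defines "P \<equiv> \<lambda>w. a w + \<epsilon> * (norm (w - w0))\<^sup>2 + \<epsilon> * (norm (w - w1))\<^sup>2 + (j/2) * (norm (A w + e - z))\<^sup>2"
  assumes r: "r > 0" and min: "\<And>w. norm (w - x) < r \<Longrightarrow> P x \<le> P w"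
  shows "a u + (j *\<^sub>R (A x + e - z)) \<bullet> A u = - (2 * \<epsilon>) * (((x - w0) + (x - w1)) \<bullet> u)"
proof -
  define G where "G u = a u + 2 * \<epsilon> * ((x - w0) \<bullet> u) + 2 * \<epsilon> * ((x - w1) \<bullet> u)
      + j * ((A x + e - z) \<bullet> A u)" for u
  have expand: "P (x + s *\<^sub>R u) - P x = s * G u + s\<^sup>2 * (2 * \<epsilon> * (norm u)\<^sup>2 + (j/2) * (norm (A u))\<^sup>2)"
    for s u
  proof -
    have n: "(norm (x + s *\<^sub>R u - w))\<^sup>2 = (norm (x - w))\<^sup>2 + 2 * s * ((x - w) \<bullet> u) + s\<^sup>2 * (norm u)\<^sup>2"
      for w
    proof -
      have "x + s *\<^sub>R u - w = (x - w) + s *\<^sub>R u" by simp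
      then show ?thesis by (simp only: norm_add_scaleR_square)
    qed
    have nA: "(norm (A (x + s *\<^sub>R u) + e - z))\<^sup>2
        = (norm (A x + e - z))\<^sup>2 + 2 * s * ((A x + e - z) \<bullet> A u) + s\<^sup>2 * (norm (A u))\<^sup>2"
    proof -
      have "A (x + s *\<^sub>R u) + e - z = (A x + e - z) + s *\<^sub>R A u"
        by (simp add: blinfun.add_right blinfun.scaleR_right algebra_simps)
      then show ?thesis by (simp only: norm_add_scaleR_square)
    qed
    show ?thesis
      unfolding P_def G_def n nA by (simp add: blinfun.add_right blinfun.scaleR_right algebra_simps)
  qed
  have G_nonneg: "G u \<ge> 0" for u
  proof (rule nonneg_of_nonneg_quadratic_near_zero)
    show "r / (norm u + 1) > 0" using r by (simp add: add_nonneg_pos)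
    show "\<forall>s. 0 < s \<and> s < r / (norm u + 1) \<longrightarrow>
        0 \<le> s * G u + s\<^sup>2 * (2 * \<epsilon> * (norm u)\<^sup>2 + (j/2) * (norm (A u))\<^sup>2)"
    proof (intro allI impI, elim conjE)
      fix s :: real assume s: "0 < s" "s < r / (norm u + 1)"
      have "s * norm u < r"
        using s by (smt (verit, best) mult_left_mono norm_ge_zero pos_less_divide_eq)
      then have "norm ((x + s *\<^sub>R u) - x) < r" using s by simp
      then show "0 \<le> s * G u + s\<^sup>2 * (2 * \<epsilon> * (norm u)\<^sup>2 + (j/2) * (norm (A u))\<^sup>2)"
        using min expand[of s u] by fastforce
    qed
  qed
  have "G (- u) = - G u" unfolding G_def by (simp add: blinfun.minus_right)
  then have "G u = 0" using G_nonneg[of u] G_nonneg[of "- u"] by simp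
  then show ?thesis unfolding G_def by (simp add: inner_add_left algebra_simps)
qed

lemma penalty_localization:
  fixes W :: "'a::euclidean_space set" and T :: "'b::euclidean_space set"
    and A :: "'a \<Rightarrow>\<^sub>L 'b" and \<Phi> :: "'a \<Rightarrow> real"
  assumes Tc: "closed T" and wtW: "wt \<in> W" and WT: "\<forall>w\<in>W. A w + e \<in> T"
    and reg: "\<forall>w z. z \<in> T \<longrightarrow> (\<exists>w'\<in>W. norm (w' - w) \<le> \<kappa> * norm (A w + e - z))"
    and \<kappa>: "\<kappa> > 0" and \<epsilon>: "\<epsilon> > 0" and Lip: "Lip > 0"
    and cont: "continuous_on UNIV \<Phi>"
    and lip: "\<And>w1 w2. norm (w1 - wt) \<le> 2 \<Longrightarrow> norm (w2 - wt) \<le> 2 \<Longrightarrow>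
        \<Phi> w1 - \<Phi> w2 \<le> Lip * norm (w1 - w2)"
    and \<Phi>min: "\<And>w. w \<in> W \<Longrightarrow> \<Phi> wt + \<epsilon> * (norm (w - wt))\<^sup>2 \<le> \<Phi> w"
    and \<zeta>: "\<zeta> > 0" "\<zeta> \<le> 1/4" "\<kappa> * \<zeta> \<le> 1/4" "norm A * \<zeta> \<le> 1/4"
  shows "\<exists>j>0. \<exists>wj zj. zj \<in> T \<and> norm (wj - wt) \<le> \<zeta> \<and> norm (A wj + e - zj) \<le> \<zeta>
    \<and> j * norm (A wj + e - zj) \<le> 2 * Lip * (\<kappa> + 1)
    \<and> (\<forall>w z. norm (w - wt) \<le> 1 \<longrightarrow> z \<in> T \<longrightarrow> norm (z - (A wt + e)) \<le> 1 \<longrightarrow>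
         \<Phi> wj + (j/2) * (norm (A wj + e - zj))\<^sup>2 \<le> \<Phi> w + (j/2) * (norm (A w + e - z))\<^sup>2)"
proof -
  obtain \<theta> where \<theta>: "\<theta> > 0"
    and h\<theta>: "\<forall>D. 0 \<le> D \<and> D \<le> \<theta> \<longrightarrow> \<kappa> * D + sqrt ((Lip * \<kappa> / \<epsilon>) * D) \<le> \<zeta> \<and> D \<le> \<zeta>"
    using exists_small_sqrt_bound[of \<kappa> "Lip * \<kappa> / \<epsilon>" \<zeta>] \<kappa> Lip \<epsilon> \<zeta> by auto
  define j where "j = 2 * Lip / \<theta>\<^sup>2 + 1"
  have j: "j > 0" unfolding j_def using Lip \<theta> by (simp add: add_nonneg_pos)
  define c0 where "c0 = A wt + e"
  have c0T: "c0 \<in> T" unfolding c0_def using WT wtW by blast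
  define Dom where "Dom = cball wt 1 \<times> (cball c0 1 \<inter> T)"
  have Domc: "compact Dom" unfolding Dom_def
    by (intro compact_Times compact_cball compact_Int_closed Tc)
  have Dne: "(wt, c0) \<in> Dom" unfolding Dom_def using c0T by simp
  define F where "F p = \<Phi> (fst p) + (j/2) * (norm (A (fst p) + e - snd p))\<^sup>2" for p
  have "continuous_on Dom (\<lambda>p. \<Phi> (fst p))"
    by (rule continuous_on_compose2[OF cont]) (auto intro: continuous_intros)
  then have Fc: "continuous_on Dom F" unfolding F_def by (intro continuous_intros)
  obtain pm where "pm \<in> Dom" "\<forall>p\<in>Dom. F pm \<le> F p"
    using continuous_attains_inf[OF Domc _ Fc] Dne by blast
  moreover obtain wj zj where "pm = (wj, zj)" by (cases pm)
  ultimately have pm: "(wj, zj) \<in> Dom" "\<forall>p\<in>Dom. F (wj, zj) \<le> F p" by auto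
  have wj1: "norm (wj - wt) \<le> 1" and zjT: "zj \<in> T"
    using pm(1) unfolding Dom_def by (auto simp: dist_norm norm_minus_commute)
  define D where "D = norm (A wj + e - zj)"
  have Fpm: "F (wj, zj) = \<Phi> wj + (j/2) * D\<^sup>2" unfolding F_def D_def by simp
  have "F (wj, zj) \<le> F (wt, c0)" using pm(2) Dne by blast
  moreover have "F (wt, c0) = \<Phi> wt" by (simp add: F_def c0_def)
  ultimately have F1: "\<Phi> wj + (j/2) * D\<^sup>2 \<le> \<Phi> wt" using Fpm by simp
  have "\<Phi> wt - \<Phi> wj \<le> Lip * norm (wt - wj)" by (rule lip) (use wj1 in auto)
  also have "\<dots> \<le> Lip" using wj1 Lip by (simp add: mult_left_le norm_minus_commute)
  finally have "j * D\<^sup>2 \<le> 2 * Lip" using F1 by linarith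
  then have D2: "D\<^sup>2 \<le> 2 * Lip / j" using j by (simp add: pos_le_divide_eq mult.commute)
  have "\<theta>\<^sup>2 * j = 2 * Lip + \<theta>\<^sup>2" unfolding j_def using \<theta> by (simp add: field_simps)
  then have "2 * Lip / j \<le> \<theta>\<^sup>2" using j \<theta> by (simp add: pos_divide_le_eq)
  with D2 have "D\<^sup>2 \<le> \<theta>\<^sup>2" by linarith
  then have D\<theta>: "D \<le> \<theta>" by (rule power2_le_imp_le) (use \<theta> in auto)
  have D0: "D \<ge> 0" unfolding D_def by simp
  have Dbd: "\<kappa> * D + sqrt ((Lip * \<kappa> / \<epsilon>) * D) \<le> \<zeta>" "D \<le> \<zeta>"
    using h\<theta>[rule_format, of D] D0 D\<theta> by blast+
  \<comment> \<open>A feasible point \<open>w'\<close> near \<open>wj\<close> (by subregularity) is forced near \<open>wt\<close> by the strong minimality of \<open>wt\<close>.\<close>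
  obtain w' where w'W: "w' \<in> W" and w'j: "norm (w' - wj) \<le> \<kappa> * D"
    using reg zjT unfolding D_def by blast
  have "\<kappa> * D \<le> \<kappa> * \<zeta>" using Dbd(2) \<kappa> by (intro mult_left_mono) auto
  then have "\<kappa> * D \<le> 1/4" using \<zeta>(3) by simp
  then have w't2: "norm (w' - wt) \<le> 2"
    using norm_triangle_ineq[of "w' - wj" "wj - wt"] w'j wj1 by simp
  have lipw': "\<Phi> w' - \<Phi> wj \<le> Lip * (\<kappa> * D)"
  proof -
    have "\<Phi> w' - \<Phi> wj \<le> Lip * norm (w' - wj)" using lip[of w' wj] w't2 wj1 by simp
    also have "\<dots> \<le> Lip * (\<kappa> * D)" using w'j Lip by (intro mult_left_mono) auto
    finally show ?thesis .
  qed
  have "(j/2) * D\<^sup>2 \<ge> 0" using j by simp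
  then have "\<epsilon> * (norm (w' - wt))\<^sup>2 \<le> Lip * (\<kappa> * D)"
    using \<Phi>min[OF w'W] lipw' F1 by linarith
  then have "(norm (w' - wt))\<^sup>2 \<le> (Lip * \<kappa> / \<epsilon>) * D"
    using \<epsilon> by (simp add: pos_le_divide_eq mult_ac)
  then have w'wt: "norm (w' - wt) \<le> sqrt ((Lip * \<kappa> / \<epsilon>) * D)" by (rule real_le_rsqrt)
  have wj\<zeta>: "norm (wj - wt) \<le> \<zeta>"
    using norm_triangle_ineq[of "wj - w'" "w' - wt"] w'j w'wt Dbd(1) by (simp add: norm_minus_commute)
  have "\<kappa> * D \<ge> 0" using \<kappa> D0 by simp
  then have w'\<zeta>: "norm (w' - wt) \<le> \<zeta>" using w'wt Dbd(1) by linarith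
  have "norm (A w' + e - c0) \<le> 1"
  proof -
    have "norm (A w' + e - c0) \<le> norm A * norm (w' - wt)"
      using norm_blinfun[of A "w' - wt"] unfolding c0_def by (simp add: blinfun.diff_right)
    also have "\<dots> \<le> norm A * \<zeta>" using w'\<zeta> by (intro mult_left_mono) auto
    finally show ?thesis using \<zeta>(4) by simp
  qed
  then have "(w', A w' + e) \<in> Dom"
    unfolding Dom_def using WT w'W w'\<zeta> \<zeta>(2) by (auto simp: dist_norm norm_minus_commute)
  then have "F (wj, zj) \<le> F (w', A w' + e)" using pm(2) by blast
  then have "F (wj, zj) \<le> \<Phi> w'" by (simp add: F_def)
  then have jD: "(j/2) * D\<^sup>2 \<le> Lip * (\<kappa> * D)" using lipw' Fpm by simp
  have "j * D \<le> 2 * Lip * (\<kappa> + 1)"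
  proof (cases "D = 0")
    case False
    then have "(j/2) * D \<le> Lip * \<kappa>"
      using jD D0 by (simp add: power2_eq_square mult_le_cancel_right_pos mult_ac)
    then show ?thesis using Lip by (simp add: algebra_simps)
  qed (use Lip \<kappa> in simp)
  moreover have "\<Phi> wj + (j/2) * D\<^sup>2 \<le> \<Phi> w + (j/2) * (norm (A w + e - z))\<^sup>2"
    if "norm (w - wt) \<le> 1" "z \<in> T" "norm (z - c0) \<le> 1" for w z
  proof -
    have "(w, z) \<in> Dom" using that unfolding Dom_def by (simp add: dist_norm norm_minus_commute)
    then have "F (wj, zj) \<le> F (w, z)" using pm(2) by blast
    then show ?thesis by (simp add: F_def D_def)
  qed
  ultimately show ?thesis
    using j zjT wj\<zeta> Dbd(2) unfolding D_def c0_def by blast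
qed

lemma approximate_multiplier:
  fixes W :: "'a::euclidean_space set" and T :: "'b::euclidean_space set"
    and A :: "'a \<Rightarrow>\<^sub>L 'b" and a :: "'a \<Rightarrow>\<^sub>L real"
  assumes Tc: "closed T" and wtW: "wt \<in> W" and WT: "\<forall>w\<in>W. A w + e \<in> T"
    and reg: "\<forall>w z. z \<in> T \<longrightarrow> (\<exists>w'\<in>W. norm (w' - w) \<le> \<kappa> * norm (A w + e - z))"
    and \<kappa>: "\<kappa> > 0" and \<epsilon>: "\<epsilon> > 0"
    and wmin: "\<forall>w\<in>W. a wt + \<epsilon> * (norm (wt - w0))\<^sup>2 \<le> a w + \<epsilon> * (norm (w - w0))\<^sup>2"
    and \<eta>: "\<eta> > 0"
  shows "\<exists>z\<in>T. norm (z - (A wt + e)) < \<eta> \<and> (\<exists>l\<in>regular_normal_cone T z.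
      norm l \<le> 2 * (norm a + 2 * \<epsilon> * norm (wt - w0) + 8 * \<epsilon>) * (\<kappa> + 1)
      \<and> (\<forall>u. \<bar>a u + l \<bullet> A u\<bar> \<le> (2 * \<epsilon> * norm (wt - w0) + \<eta>) * norm u))"
proof -
  define Lip where "Lip = norm a + 2 * \<epsilon> * norm (wt - w0) + 8 * \<epsilon>"
  have Lip: "Lip > 0" unfolding Lip_def using \<epsilon> by (simp add: add_nonneg_pos)
  define \<Phi> where "\<Phi> w = a w + \<epsilon> * (norm (w - w0))\<^sup>2 + \<epsilon> * (norm (w - wt))\<^sup>2" for w
  have cont: "continuous_on UNIV \<Phi>" unfolding \<Phi>_def by (intro continuous_intros)
  have lip: "\<Phi> w1 - \<Phi> w2 \<le> Lip * norm (w1 - w2)"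
    if "norm (w1 - wt) \<le> 2" "norm (w2 - wt) \<le> 2" for w1 w2
    unfolding \<Phi>_def Lip_def using proximal_objective_lipschitz[OF \<epsilon> that, of a w0] by simp
  have \<Phi>min: "\<Phi> wt + \<epsilon> * (norm (w - wt))\<^sup>2 \<le> \<Phi> w" if "w \<in> W" for w
    using wmin that unfolding \<Phi>_def by auto
  define \<zeta> where "\<zeta> = min (1/4) (\<eta>/4) / (norm A + 4 * \<epsilon> + \<kappa> + 1)"
  have den: "norm A + 4 * \<epsilon> + \<kappa> + 1 > 0" using \<epsilon> \<kappa> by (simp add: add_nonneg_pos add_pos_pos)
  have \<zeta>: "\<zeta> > 0" unfolding \<zeta>_def using \<eta> den by simp
  have \<zeta>_le: "\<zeta> * c \<le> min (1/4) (\<eta>/4)" if "c \<le> norm A + 4 * \<epsilon> + \<kappa> + 1" for c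
    using mult_left_mono[OF that, of \<zeta>] \<zeta> den unfolding \<zeta>_def by simp
  have \<zeta>_bounds: "\<zeta> \<le> 1/4" "\<kappa> * \<zeta> \<le> 1/4" "norm A * \<zeta> \<le> 1/4"
      "\<zeta> * (1 + norm A) \<le> \<eta>/4" "4 * \<epsilon> * \<zeta> \<le> \<eta>/4"
    using \<zeta>_le[of 1] \<zeta>_le[of \<kappa>] \<zeta>_le[of "norm A"] \<zeta>_le[of "1 + norm A"] \<zeta>_le[of "4 * \<epsilon>"] \<epsilon> \<kappa>
    by (auto simp: mult_ac)
  obtain j wj zj where j: "j > 0" and zjT: "zj \<in> T" and wj: "norm (wj - wt) \<le> \<zeta>"
    and D: "norm (A wj + e - zj) \<le> \<zeta>" and jD: "j * norm (A wj + e - zj) \<le> 2 * Lip * (\<kappa> + 1)"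
    and Fmin: "\<And>w z. norm (w - wt) \<le> 1 \<Longrightarrow> z \<in> T \<Longrightarrow> norm (z - (A wt + e)) \<le> 1 \<Longrightarrow>
       \<Phi> wj + (j/2) * (norm (A wj + e - zj))\<^sup>2 \<le> \<Phi> w + (j/2) * (norm (A w + e - z))\<^sup>2"
    using penalty_localization[OF Tc wtW WT reg \<kappa> \<epsilon> Lip cont lip \<Phi>min \<zeta> \<zeta>_bounds(1-3)] by metis
  define q where "q = A wj + e - zj"
  define l where "l = j *\<^sub>R q"
  have zj_near: "norm (zj - (A wt + e)) \<le> \<eta>/4 \<and> norm (zj - (A wt + e)) \<le> 1/4"
  proof -
    have "zj - (A wt + e) = A (wj - wt) - q" unfolding q_def by (simp add: blinfun.diff_right)
    then have "norm (zj - (A wt + e)) \<le> norm (A (wj - wt)) + norm q"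
      by (simp add: norm_triangle_ineq4)
    also have "norm (A (wj - wt)) \<le> norm A * \<zeta>"
      using norm_blinfun[of A "wj - wt"] mult_left_mono[OF wj norm_ge_zero[of A]] by linarith
    finally have "norm (zj - (A wt + e)) \<le> \<zeta> * (1 + norm A)"
      using D unfolding q_def by (simp add: algebra_simps)
    moreover have "\<zeta> * (1 + norm A) \<le> 1/4" using \<zeta>_le[of "1 + norm A"] \<epsilon> \<kappa> by simp
    ultimately show ?thesis using \<zeta>_bounds(4) by linarith
  qed
  \<comment> \<open>Minimality in the second variable: \<open>l\<close> is a proximal, hence regular, normal to \<open>T\<close> at \<open>zj\<close>.\<close>
  have lreg: "l \<in> regular_normal_cone T zj"
  proof (rule regular_normal_coneI_quadratic[OF zjT, of "1/4"])
    fix z' assume z'T: "z' \<in> T" and z'near: "norm (z' - zj) < 1/4"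
    have "norm (z' - (A wt + e)) \<le> 1/4 + 1/4"
      by (rule norm_diff_triangle_le) (use z'near zj_near in auto)
    then have "(norm q)\<^sup>2 \<le> (norm (q + (-1) *\<^sub>R (z' - zj)))\<^sup>2"
      using Fmin[of wj z'] wj \<zeta>_bounds(1) z'T j unfolding q_def by (simp add: algebra_simps)
    then have "2 * (q \<bullet> (z' - zj)) \<le> (norm (z' - zj))\<^sup>2"
      unfolding norm_add_scaleR_square by simp
    then show "l \<bullet> (z' - zj) \<le> (j/2) * (norm (z' - zj))\<^sup>2"
      unfolding l_def using j by (simp add: field_simps)
  qed simp
  \<comment> \<open>Minimality in the first variable: the penalized objective is stationary at \<open>wj\<close>.\<close>
  have grad: "a u + l \<bullet> A u = - (2 * \<epsilon>) * (((wj - w0) + (wj - wt)) \<bullet> u)" for u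
    unfolding l_def q_def
  proof (rule local_min_penalty_gradient[of "1/2"])
    fix w assume "norm (w - wj) < 1/2"
    then have "norm (w - wt) \<le> 1"
      using norm_triangle_ineq[of "w - wj" "wj - wt"] wj \<zeta>_bounds(1) by simp
    then show "a wj + \<epsilon> * (norm (wj - w0))\<^sup>2 + \<epsilon> * (norm (wj - wt))\<^sup>2 + (j/2) * (norm (A wj + e - zj))\<^sup>2
        \<le> a w + \<epsilon> * (norm (w - w0))\<^sup>2 + \<epsilon> * (norm (w - wt))\<^sup>2 + (j/2) * (norm (A w + e - zj))\<^sup>2"
      using Fmin[OF _ zjT] zj_near unfolding \<Phi>_def by simp
  qed simp
  have "\<bar>a u + l \<bullet> A u\<bar> \<le> (2 * \<epsilon> * norm (wt - w0) + \<eta>) * norm u" for u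
  proof -
    have eq: "(wj - w0) + (wj - wt) = (wt - w0) + 2 *\<^sub>R (wj - wt)"
      by (simp add: scaleR_2 algebra_simps)
    have "norm ((wj - w0) + (wj - wt)) \<le> norm (wt - w0) + 2 * norm (wj - wt)"
      unfolding eq using norm_triangle_ineq[of "wt - w0" "2 *\<^sub>R (wj - wt)"] by simp
    then have "norm ((wj - w0) + (wj - wt)) \<le> norm (wt - w0) + 2 * \<zeta>" using wj by linarith
    then have "\<bar>((wj - w0) + (wj - wt)) \<bullet> u\<bar> \<le> (norm (wt - w0) + 2 * \<zeta>) * norm u"
      using Cauchy_Schwarz_ineq2[of "(wj - w0) + (wj - wt)" u] mult_right_mono[of _ _ "norm u"]
      by (meson norm_ge_zero order_trans)
    then have "\<bar>a u + l \<bullet> A u\<bar> \<le> 2 * \<epsilon> * ((norm (wt - w0) + 2 * \<zeta>) * norm u)"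
      unfolding grad using \<epsilon> by (simp add: abs_mult)
    also have "\<dots> = (2 * \<epsilon> * norm (wt - w0) + 4 * \<epsilon> * \<zeta>) * norm u" by (simp add: algebra_simps)
    also have "\<dots> \<le> (2 * \<epsilon> * norm (wt - w0) + \<eta>) * norm u"
      using \<zeta>_bounds(5) \<eta> by (intro mult_right_mono) auto
    finally show ?thesis .
  qed
  moreover have "norm l \<le> 2 * Lip * (\<kappa> + 1)" unfolding l_def q_def using jD j by simp
  moreover have "norm (zj - (A wt + e)) < \<eta>" using zj_near \<eta> by linarith
  ultimately show ?thesis using zjT lreg unfolding Lip_def by blast
qed

lemma limiting_multiplier:
  fixes W :: "'a::euclidean_space set" and T :: "'b::euclidean_space set"
    and A :: "'a \<Rightarrow>\<^sub>L 'b" and a :: "'a \<Rightarrow>\<^sub>L real"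
  assumes "closed T" and "wt \<in> W" and "\<forall>w\<in>W. A w + e \<in> T"
    and "\<forall>w z. z \<in> T \<longrightarrow> (\<exists>w'\<in>W. norm (w' - w) \<le> \<kappa> * norm (A w + e - z))"
    and "\<kappa> > 0" and "\<epsilon> > 0"
    and "\<forall>w\<in>W. a wt + \<epsilon> * (norm (wt - w0))\<^sup>2 \<le> a w + \<epsilon> * (norm (w - w0))\<^sup>2"
  shows "\<exists>l\<in>limiting_normal_cone T (A wt + e).
      norm l \<le> 2 * (norm a + 2 * \<epsilon> * norm (wt - w0) + 8 * \<epsilon>) * (\<kappa> + 1)
      \<and> (\<forall>u. \<bar>a u + l \<bullet> A u\<bar> \<le> (2 * \<epsilon> * norm (wt - w0)) * norm u)"
  by (rule limiting_normal_of_approximate_normals) (use approximate_multiplier[OF assms] in blast)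

lemma near_optimal_limiting_multiplier:
  fixes W :: "'a::euclidean_space set" and T :: "'b::euclidean_space set"
    and A :: "'a \<Rightarrow>\<^sub>L 'b" and a :: "'a \<Rightarrow>\<^sub>L real"
  assumes Wc: "closed W" and Tc: "closed T" and WT: "\<forall>w\<in>W. A w + e \<in> T"
    and reg: "\<forall>w z. z \<in> T \<longrightarrow> (\<exists>w'\<in>W. norm (w' - w) \<le> \<kappa> * norm (A w + e - z))"
    and \<kappa>: "\<kappa> > 0"
    and \<alpha>le: "\<And>w. w \<in> W \<Longrightarrow> \<alpha> \<le> a w + h"
    and w0: "w0 \<in> W" "a w0 + h < \<alpha> + iv" and iv: "iv > 0" "iv \<le> 1"
  shows "\<exists>wt\<in>W. \<exists>l\<in>limiting_normal_cone T (A wt + e). norm l \<le> 2 * (norm a + 10) * (\<kappa> + 1)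
    \<and> (\<forall>u. \<bar>a u + l \<bullet> A u\<bar> \<le> (2 * iv) * norm u)
    \<and> a wt + h < \<alpha> + iv \<and> \<bar>a wt + l \<bullet> A wt\<bar> \<le> 4 * iv"
proof -
  define n where "n = norm w0"
  define \<epsilon> where "\<epsilon> = iv / (n + 1)\<^sup>2"
  have n0: "n \<ge> 0" unfolding n_def by simp
  have \<epsilon>: "\<epsilon> > 0" unfolding \<epsilon>_def using iv n0 by (simp add: add_nonneg_pos)
  have \<epsilon>n: "\<epsilon> * (n + 1)\<^sup>2 = iv" unfolding \<epsilon>_def using n0 by simp
  have \<epsilon>iv: "\<epsilon> \<le> iv"
  proof -
    have n1: "1 \<le> (n + 1)\<^sup>2" using one_le_power[of "n+1" 2] n0 by simp
    have "\<epsilon> * 1 \<le> \<epsilon> * (n + 1)\<^sup>2" using \<epsilon> n1 by (intro mult_left_mono) auto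
    then show ?thesis using \<epsilon>n by simp
  qed
  obtain wt where wtW: "wt \<in> W" and wmin: "\<forall>w\<in>W. a wt + \<epsilon> * (norm (wt - w0))\<^sup>2 \<le> a w + \<epsilon> * (norm (w - w0))\<^sup>2"
    using exists_proximal_min[OF Wc w0(1) \<epsilon>] by blast
  define q where "q = norm (wt - w0)"
  have q0: "q \<ge> 0" unfolding q_def by simp
  have m1: "a wt + \<epsilon> * q\<^sup>2 \<le> a w0" using wmin[rule_format, OF w0(1)] unfolding q_def by simp
  have \<alpha>wt: "\<alpha> \<le> a wt + h" by (rule \<alpha>le[OF wtW])
  have eq2: "\<epsilon> * q\<^sup>2 < iv" using m1 \<alpha>wt w0(2) by linarith
  have eq2': "\<epsilon> * q\<^sup>2 \<ge> 0" using \<epsilon> by simp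
  have eq: "\<epsilon> * q \<le> iv"
  proof (rule power2_le_imp_le)
    have "(\<epsilon> * q)\<^sup>2 = \<epsilon> * (\<epsilon> * q\<^sup>2)" by (simp add: power2_eq_square)
    also have "\<dots> \<le> \<epsilon> * iv" using eq2 \<epsilon> by (intro mult_left_mono) auto
    also have "\<dots> \<le> iv * iv" using \<epsilon>iv iv by (intro mult_right_mono) auto
    finally show "(\<epsilon> * q)\<^sup>2 \<le> iv\<^sup>2" by (simp add: power2_eq_square)
  qed (use iv in simp)
  have eqn: "\<epsilon> * q * n \<le> iv"
  proof (rule power2_le_imp_le)
    have "n\<^sup>2 \<le> (n + 1)\<^sup>2" using n0 by (intro power_mono) auto
    then have "\<epsilon> * n\<^sup>2 \<le> \<epsilon> * (n + 1)\<^sup>2" using \<epsilon> by (intro mult_left_mono) auto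
    then have en: "\<epsilon> * n\<^sup>2 \<le> iv" using \<epsilon>n by simp
    have "(\<epsilon> * q * n)\<^sup>2 = (\<epsilon> * q\<^sup>2) * (\<epsilon> * n\<^sup>2)" by (simp add: power2_eq_square)
    also have "\<dots> \<le> iv * iv" using eq2 en eq2' \<epsilon> iv by (intro mult_mono) auto
    finally show "(\<epsilon> * q * n)\<^sup>2 \<le> iv\<^sup>2" by (simp add: power2_eq_square)
  qed (use iv in simp)
  obtain l where lN: "l \<in> limiting_normal_cone T (A wt + e)"
    and lM: "norm l \<le> 2 * (norm a + 2 * \<epsilon> * norm (wt - w0) + 8 * \<epsilon>) * (\<kappa> + 1)"
    and lg: "\<forall>u. \<bar>a u + l \<bullet> A u\<bar> \<le> (2 * \<epsilon> * norm (wt - w0)) * norm u"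
    using limiting_multiplier[OF Tc wtW WT reg \<kappa> \<epsilon> wmin] by blast
  have "norm l \<le> 2 * (norm a + 10) * (\<kappa> + 1)"
  proof -
    have "2 * \<epsilon> * norm (wt - w0) + 8 * \<epsilon> \<le> 10"
      using eq \<epsilon>iv iv unfolding q_def by linarith
    then have "2 * (norm a + 2 * \<epsilon> * norm (wt - w0) + 8 * \<epsilon>) * (\<kappa> + 1) \<le> 2 * (norm a + 10) * (\<kappa> + 1)"
      using \<kappa> by (intro mult_right_mono) auto
    then show ?thesis using lM by simp
  qed
  moreover have "\<forall>u::'a. \<bar>a u + l \<bullet> A u\<bar> \<le> (2 * iv) * norm u"
  proof
    fix u :: 'a
    have "(2 * \<epsilon> * norm (wt - w0)) * norm u \<le> (2 * iv) * norm u"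
      using eq unfolding q_def by (intro mult_right_mono) auto
    then show "\<bar>a u + l \<bullet> A u\<bar> \<le> (2 * iv) * norm u" using lg by (meson order_trans)
  qed
  moreover have "a wt + h < \<alpha> + iv" using m1 w0(2) eq2' by linarith
  moreover have "\<bar>a wt + l \<bullet> A wt\<bar> \<le> 4 * iv"
  proof -
    have "\<bar>a wt + l \<bullet> A wt\<bar> \<le> (2 * \<epsilon> * q) * norm wt" using lg unfolding q_def by blast
    also have "\<dots> \<le> (2 * \<epsilon> * q) * (n + q)"
    proof (rule mult_left_mono)
      show "norm wt \<le> n + q" unfolding n_def q_def using norm_triangle_ineq[of w0 "wt - w0"] by simp
    qed (use \<epsilon> q0 in simp)
    also have "\<dots> = 2 * (\<epsilon> * q * n) + 2 * (\<epsilon> * q\<^sup>2)" by (simp add: power2_eq_square algebra_simps)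
    also have "\<dots> \<le> 4 * iv" using eqn eq2 by linarith
    finally show ?thesis .
  qed
  ultimately show ?thesis using wtW lN by blast
qed

lemma limit_of_near_optimal_multipliers:
  fixes LL :: "nat \<Rightarrow> 'b::euclidean_space" and A :: "'a::real_normed_vector \<Rightarrow> 'b" and a :: "'a \<Rightarrow> real"
  assumes bnd: "\<And>k. norm (LL k) \<le> B"
    and stat: "\<And>k u. \<bar>a u + LL k \<bullet> A u\<bar> \<le> (2 * inverse (real (Suc k))) * norm u"
    and val: "\<And>k. \<alpha> \<le> a (WW k) + h \<and> a (WW k) + h < \<alpha> + inverse (real (Suc k))"
    and compl: "\<And>k. \<bar>a (WW k) + LL k \<bullet> A (WW k)\<bar> \<le> 4 * inverse (real (Suc k))"
  shows "\<exists>\<phi> lam. strict_mono \<phi> \<and> (\<lambda>k. LL (\<phi> k)) \<longlonglongrightarrow> lam \<and> (\<forall>u. a u + lam \<bullet> A u = 0)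
    \<and> (\<lambda>k. a (WW (\<phi> k)) + h) \<longlonglongrightarrow> \<alpha> \<and> (\<lambda>k. LL (\<phi> k) \<bullet> A (WW (\<phi> k)) + a (WW (\<phi> k))) \<longlonglongrightarrow> 0"
proof -
  have "bounded (range LL)" unfolding bounded_iff using bnd by blast
  then obtain lam \<phi> where \<phi>: "strict_mono \<phi>" "(LL \<circ> \<phi>) \<longlonglongrightarrow> lam"
    using bounded_imp_convergent_subsequence by blast
  have inv\<phi>: "(\<lambda>k. inverse (real (Suc (\<phi> k)))) \<longlonglongrightarrow> 0"
    using LIMSEQ_subseq_LIMSEQ[OF LIMSEQ_inverse_real_of_nat \<phi>(1)] by (simp add: comp_def)
  have Llim: "(\<lambda>k. LL (\<phi> k)) \<longlonglongrightarrow> lam" using \<phi>(2) by (simp add: comp_def)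
  have "\<bar>a u + lam \<bullet> A u\<bar> \<le> (2 * 0) * norm u" for u
  proof (rule LIMSEQ_le)
    show "(\<lambda>k. \<bar>a u + LL (\<phi> k) \<bullet> A u\<bar>) \<longlonglongrightarrow> \<bar>a u + lam \<bullet> A u\<bar>" by (intro tendsto_intros Llim)
    show "(\<lambda>k. (2 * inverse (real (Suc (\<phi> k)))) * norm u) \<longlonglongrightarrow> (2 * 0) * norm u"
      by (intro tendsto_intros inv\<phi>)
  qed (use stat in blast)
  then have "\<forall>u. a u + lam \<bullet> A u = 0" by simp
  moreover have "(\<lambda>k. a (WW (\<phi> k)) + h) \<longlonglongrightarrow> \<alpha>"
  proof (rule LIM_zero_cancel, rule Lim_null_comparison[OF _ inv\<phi>], intro always_eventually allI)
    fix k show "norm (a (WW (\<phi> k)) + h - \<alpha>) \<le> inverse (real (Suc (\<phi> k)))"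
      using val[of "\<phi> k"] by simp
  qed
  moreover have "(\<lambda>k. LL (\<phi> k) \<bullet> A (WW (\<phi> k)) + a (WW (\<phi> k))) \<longlonglongrightarrow> 0"
  proof (rule Lim_null_comparison[where g="\<lambda>k. 4 * inverse (real (Suc (\<phi> k)))"])
    show "\<forall>\<^sub>F k in sequentially. norm (LL (\<phi> k) \<bullet> A (WW (\<phi> k)) + a (WW (\<phi> k)))
        \<le> 4 * inverse (real (Suc (\<phi> k)))"
      using compl by (intro always_eventually allI) (simp add: add.commute)
    show "(\<lambda>k. 4 * inverse (real (Suc (\<phi> k)))) \<longlonglongrightarrow> 0"
      using tendsto_mult[OF tendsto_const inv\<phi>, of 4] by simp
  qed
  ultimately show ?thesis using \<phi>(1) Llim by blast
qed

lemma linearized_problem: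
  fixes f :: "'a::euclidean_space \<Rightarrow> real" and g :: "'a \<Rightarrow> 'b::euclidean_space"
    and f' :: "'a \<Rightarrow> 'a \<Rightarrow>\<^sub>L real" and f'' :: "'a \<Rightarrow> 'a \<Rightarrow>\<^sub>L ('a \<Rightarrow>\<^sub>L real)"
    and g' :: "'a \<Rightarrow> 'a \<Rightarrow>\<^sub>L 'b" and g'' :: "'a \<Rightarrow> 'a \<Rightarrow>\<^sub>L ('a \<Rightarrow>\<^sub>L 'b)"
  assumes f1: "\<And>x. (f has_derivative blinfun_apply (f' x)) (at x)"
    and f2: "(f' has_derivative blinfun_apply (f'' xbar)) (at xbar)"
    and g1: "\<And>x. (g has_derivative blinfun_apply (g' x)) (at x)"
    and g2: "(g' has_derivative blinfun_apply (g'' xbar)) (at xbar)"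
    and K_closed: "closed K" and opt: "local_opt_dir f (g -` K) xbar d"
    and crit: "f' xbar d = 0" and mscq: "MSCQ_dir g K xbar d"
  shows "\<exists>\<kappa>>0.
      (\<forall>c w. w \<in> second_order_tangent c (g -` K) xbar d \<longrightarrow>
         g' xbar w + c *\<^sub>R g'' xbar d d \<in> second_order_tangent c K (g xbar) (g' xbar d))
    \<and> (\<forall>c w z. z \<in> second_order_tangent c K (g xbar) (g' xbar d) \<longrightarrow>
         (\<exists>w'\<in>second_order_tangent c (g -` K) xbar d.
            norm (w' - w) \<le> \<kappa> * norm (g' xbar w + c *\<^sub>R g'' xbar d d - z)))
    \<and> (\<forall>c w. w \<in> second_order_tangent c (g -` K) xbar d \<longrightarrow> f' xbar w + c * f'' xbar d d \<ge> 0)"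
proof -
  have xC: "g xbar \<in> K" using opt unfolding local_opt_dir_def by simp
  obtain \<rho> \<delta> \<kappa> where \<rho>: "\<rho> > 0" "\<delta> > 0" and \<kappa>: "\<kappa> > 0"
    and ms: "\<forall>u\<in>dir_nbhd \<rho> \<delta> d. infdist (xbar+u) (g -` K) \<le> \<kappa> * infdist (g (xbar+u)) K"
    using mscq unfolding MSCQ_dir_def by blast
  show ?thesis
  proof (intro exI[of _ \<kappa>] conjI allI impI \<kappa>)
    show "g' xbar w + c *\<^sub>R g'' xbar d d \<in> second_order_tangent c K (g xbar) (g' xbar d)"
      if "w \<in> second_order_tangent c (g -` K) xbar d" for c w
      by (rule second_order_tangent_image[where g=g and g'=g' and g''=g'', OF g1 g2 that])
    show "\<exists>w'\<in>second_order_tangent c (g -` K) xbar d. norm (w' - w) \<le> \<kappa> * norm (g' xbar w + c *\<^sub>R g'' xbar d d - z)"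
      if "z \<in> second_order_tangent c K (g xbar) (g' xbar d)" for c w z
      by (rule second_order_tangent_subregular[where g=g and g'=g' and g''=g'', OF g1 g2 K_closed xC \<rho> \<kappa> ms that])
    show "f' xbar w + c * f'' xbar d d \<ge> 0" if "w \<in> second_order_tangent c (g -` K) xbar d" for c w
      using second_order_tangent_optimality[where f=f and f'=f' and f''=f'', OF f1 f2 opt crit that] by simp
  qed
qed

lemma asymptotic_multiplier_exists:
  fixes f :: "'a::euclidean_space \<Rightarrow> real" and g :: "'a \<Rightarrow> 'b::euclidean_space"
    and f' :: "'a \<Rightarrow> 'a \<Rightarrow>\<^sub>L real" and f'' :: "'a \<Rightarrow> 'a \<Rightarrow>\<^sub>L ('a \<Rightarrow>\<^sub>L real)"
    and g' :: "'a \<Rightarrow> 'a \<Rightarrow>\<^sub>L 'b" and g'' :: "'a \<Rightarrow> 'a \<Rightarrow>\<^sub>L ('a \<Rightarrow>\<^sub>L 'b)"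
  assumes f1: "\<And>x. (f has_derivative blinfun_apply (f' x)) (at x)"
    and f2: "(f' has_derivative blinfun_apply (f'' xbar)) (at xbar)"
    and g1: "\<And>x. (g has_derivative blinfun_apply (g' x)) (at x)"
    and g2: "(g' has_derivative blinfun_apply (g'' xbar)) (at xbar)"
    and K_closed: "closed K" and d_tan: "d \<in> tangent_cone (g -` K) xbar"
    and opt: "local_opt_dir f (g -` K) xbar d"
    and crit: "f' xbar d = 0" and mscq: "MSCQ_dir g K xbar d"
  shows "\<exists>l \<in> M_multipliers (f' xbar) (g' xbar) K (g xbar) d.
        support_fun (blinfun_apply (g' xbar) ` asymptotic_second_order_tangent_cone (g -` K) xbar d) l \<le> 0
      \<and> l \<in> limiting_normal_cone (asymptotic_second_order_tangent_cone K (g xbar) (g' xbar d)) 0"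
proof -
  obtain \<kappa> where \<kappa>: "\<kappa> > 0"
    and image: "\<forall>c w. w \<in> second_order_tangent c (g -` K) xbar d \<longrightarrow>
      g' xbar w + c *\<^sub>R g'' xbar d d \<in> second_order_tangent c K (g xbar) (g' xbar d)"
    and subreg: "\<forall>c w z. z \<in> second_order_tangent c K (g xbar) (g' xbar d) \<longrightarrow>
      (\<exists>w'\<in>second_order_tangent c (g -` K) xbar d.
         norm (w' - w) \<le> \<kappa> * norm (g' xbar w + c *\<^sub>R g'' xbar d d - z))"
    and optimal: "\<forall>c w. w \<in> second_order_tangent c (g -` K) xbar d \<longrightarrow> f' xbar w + c * f'' xbar d d \<ge> 0"
    using linearized_problem[where f=f and f'=f' and f''=f'' and g=g and g'=g' and g''=g'' and xbar=xbar,
      OF f1 f2 g1 g2 K_closed opt crit mscq] by blast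
  define W where "W = second_order_tangent 0 (g -` K) xbar d"
  define T where "T = second_order_tangent 0 K (g xbar) (g' xbar d)"
  have WT: "\<forall>w\<in>W. g' xbar w + 0 *\<^sub>R g'' xbar d d \<in> T" unfolding W_def T_def using image by blast
  have reg: "\<forall>w z. z \<in> T \<longrightarrow> (\<exists>w'\<in>W. norm (w' - w) \<le> \<kappa> * norm (g' xbar w + 0 *\<^sub>R g'' xbar d d - z))"
    unfolding W_def T_def using subreg by blast
  have optW: "f' xbar w \<ge> 0" if "w \<in> W" for w using optimal[rule_format, where c=0] that unfolding W_def by simp
  have Tc: "closed T" unfolding T_def by (rule closed_second_order_tangent)
  have zero: "0 \<in> W" unfolding W_def by (rule tangent_cone_imp_zero_second_order_tangent[OF d_tan])
  \<comment> \<open>By first-order optimality \<open>0\<close> itself minimizes the proximal objective on \<open>W\<close>.\<close>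
  have "\<forall>w\<in>W. f' xbar 0 + 1 * (norm (0 - 0))\<^sup>2 \<le> f' xbar w + 1 * (norm (w - 0))\<^sup>2"
    using optW by (simp add: add_nonneg_nonneg)
  from limiting_multiplier[OF Tc zero WT reg \<kappa> zero_less_one this]
  obtain l where lN: "l \<in> limiting_normal_cone T 0" and lg: "\<forall>u. \<bar>f' xbar u + l \<bullet> g' xbar u\<bar> \<le> 0"
    by auto
  have ldir: "l \<in> directional_normal_cone K (g xbar) (g' xbar d)"
    using limiting_normal_second_order_tangent_directional[OF K_closed] lN unfolding T_def by blast
  have lstat: "\<forall>v. f' xbar v + l \<bullet> g' xbar v = 0" using lg by simp
  have "support_fun (blinfun_apply (g' xbar) ` asymptotic_second_order_tangent_cone (g -` K) xbar d) l \<le> 0"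
    unfolding support_fun_def asymptotic_second_order_tangent_cone_eq
  proof (rule SUP_least)
    fix u assume "u \<in> blinfun_apply (g' xbar) ` second_order_tangent 0 (g -` K) xbar d"
    then obtain w where w: "w \<in> W" "u = g' xbar w" unfolding W_def by blast
    have "l \<bullet> u = - f' xbar w" using lstat w(2) by (metis add_eq_0_iff)
    then show "ereal (l \<bullet> u) \<le> 0" using optW[OF w(1)] by simp
  qed
  then show ?thesis
    unfolding M_multipliers_def
    using ldir lstat lN unfolding T_def asymptotic_second_order_tangent_cone_eq by blast
qed

lemma second_order_multiplier_exists:
  fixes f :: "'a::euclidean_space \<Rightarrow> real" and g :: "'a \<Rightarrow> 'b::euclidean_space"
    and f' :: "'a \<Rightarrow> 'a \<Rightarrow>\<^sub>L real" and f'' :: "'a \<Rightarrow> 'a \<Rightarrow>\<^sub>L ('a \<Rightarrow>\<^sub>L real)"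
    and g' :: "'a \<Rightarrow> 'a \<Rightarrow>\<^sub>L 'b" and g'' :: "'a \<Rightarrow> 'a \<Rightarrow>\<^sub>L ('a \<Rightarrow>\<^sub>L 'b)"
  assumes f1: "\<And>x. (f has_derivative blinfun_apply (f' x)) (at x)"
    and f2: "(f' has_derivative blinfun_apply (f'' xbar)) (at xbar)"
    and g1: "\<And>x. (g has_derivative blinfun_apply (g' x)) (at x)"
    and g2: "(g' has_derivative blinfun_apply (g'' xbar)) (at xbar)"
    and K_closed: "closed K" and opt: "local_opt_dir f (g -` K) xbar d"
    and crit: "f' xbar d = 0" and mscq: "MSCQ_dir g K xbar d"
    and ne: "second_order_tangent_set K (g xbar) (g' xbar d) \<noteq> {}"
  shows "\<exists>l \<in> M_multipliers (f' xbar) (g' xbar) K (g xbar) d.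
        ereal (f'' xbar d d + l \<bullet> g'' xbar d d)
          - support_fun ((\<lambda>w. g' xbar w + g'' xbar d d) ` second_order_tangent_set (g -` K) xbar d) l \<ge> 0
      \<and> (\<exists>w :: nat \<Rightarrow> 'a. \<exists>ls :: nat \<Rightarrow> 'b.
           (\<forall>k. w k \<in> second_order_tangent_set (g -` K) xbar d)
         \<and> (\<forall>k. ls k \<in> limiting_normal_cone (second_order_tangent_set K (g xbar) (g' xbar d))
                          (g' xbar (w k) + g'' xbar d d))
         \<and> (\<lambda>k. ereal (f' xbar (w k) + f'' xbar d d))
             \<longlonglongrightarrow> (INF v\<in>second_order_tangent_set (g -` K) xbar d. ereal (f' xbar v + f'' xbar d d))
         \<and> (\<lambda>k. ls k \<bullet> g' xbar (w k) + f' xbar (w k)) \<longlonglongrightarrow> 0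
         \<and> ls \<longlonglongrightarrow> l)"
proof -
  obtain \<kappa> where \<kappa>: "\<kappa> > 0"
    and image: "\<forall>c w. w \<in> second_order_tangent c (g -` K) xbar d \<longrightarrow>
      g' xbar w + c *\<^sub>R g'' xbar d d \<in> second_order_tangent c K (g xbar) (g' xbar d)"
    and subreg: "\<forall>c w z. z \<in> second_order_tangent c K (g xbar) (g' xbar d) \<longrightarrow>
      (\<exists>w'\<in>second_order_tangent c (g -` K) xbar d.
         norm (w' - w) \<le> \<kappa> * norm (g' xbar w + c *\<^sub>R g'' xbar d d - z))"
    and optimal: "\<forall>c w. w \<in> second_order_tangent c (g -` K) xbar d \<longrightarrow> f' xbar w + c * f'' xbar d d \<ge> 0"
    using linearized_problem[where f=f and f'=f' and f''=f'' and g=g and g'=g' and g''=g'' and xbar=xbar,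
      OF f1 f2 g1 g2 K_closed opt crit mscq] by blast
  define W where "W = second_order_tangent 1 (g -` K) xbar d"
  define T where "T = second_order_tangent 1 K (g xbar) (g' xbar d)"
  define H where "H = g'' xbar d d"
  define h where "h = f'' xbar d d"
  define A where "A = g' xbar"
  define a where "a = f' xbar"
  have WT: "\<forall>w\<in>W. A w + H \<in> T" unfolding W_def T_def A_def H_def using image[rule_format, where c=1] by simp
  have reg: "\<forall>w z. z \<in> T \<longrightarrow> (\<exists>w'\<in>W. norm (w' - w) \<le> \<kappa> * norm (A w + H - z))"
    unfolding W_def T_def A_def H_def using subreg[rule_format, where c=1] by simp
  have optW: "a w + h \<ge> 0" if "w \<in> W" for w
    using optimal[rule_format, where c=1] that unfolding W_def a_def h_def by simp
  have Wc: "closed W" unfolding W_def by (rule closed_second_order_tangent)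
  have Tc: "closed T" unfolding T_def by (rule closed_second_order_tangent)
  obtain z0 where "z0 \<in> T" using ne unfolding T_def second_order_tangent_set_eq by blast
  then obtain w1 where w1: "w1 \<in> W" using reg by blast
  define I where "I = (INF v\<in>W. ereal (a v + h))"
  have "0 \<le> I" unfolding I_def by (rule INF_greatest) (use optW in simp)
  moreover have "I \<le> ereal (a w1 + h)" unfolding I_def using w1 by (rule INF_lower)
  ultimately obtain \<alpha> where \<alpha>: "I = ereal \<alpha>" by (cases I) auto
  have \<alpha>le: "\<alpha> \<le> a w + h" if "w \<in> W" for w
    using INF_lower[OF that, of "\<lambda>v. ereal (a v + h)"] unfolding I_def[symmetric] \<alpha> by simp
  have "\<exists>wt l. wt \<in> W \<and> l \<in> limiting_normal_cone T (A wt + H) \<and> norm l \<le> 2 * (norm a + 10) * (\<kappa> + 1)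
      \<and> (\<forall>u. \<bar>a u + l \<bullet> A u\<bar> \<le> (2 * inverse (real (Suc k))) * norm u)
      \<and> a wt + h < \<alpha> + inverse (real (Suc k)) \<and> \<bar>a wt + l \<bullet> A wt\<bar> \<le> 4 * inverse (real (Suc k))" for k
  proof -
    have iv: "inverse (real (Suc k)) > 0" "inverse (real (Suc k)) \<le> 1" by (auto simp: inverse_le_1_iff)
    then have "I < ereal (\<alpha> + inverse (real (Suc k)))" unfolding \<alpha> by simp
    then obtain w0 where "w0 \<in> W" "a w0 + h < \<alpha> + inverse (real (Suc k))"
      unfolding I_def INF_less_iff by auto
    from near_optimal_limiting_multiplier[OF Wc Tc WT reg \<kappa> \<alpha>le this iv] show ?thesis by blast
  qed
  then obtain WW LL where P: "\<And>k. WW k \<in> W \<and> LL k \<in> limiting_normal_cone T (A (WW k) + H)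
      \<and> norm (LL k) \<le> 2 * (norm a + 10) * (\<kappa> + 1)
      \<and> (\<forall>u. \<bar>a u + LL k \<bullet> A u\<bar> \<le> (2 * inverse (real (Suc k))) * norm u)
      \<and> a (WW k) + h < \<alpha> + inverse (real (Suc k)) \<and> \<bar>a (WW k) + LL k \<bullet> A (WW k)\<bar> \<le> 4 * inverse (real (Suc k))"
    using choice2[of "\<lambda>k wt l. wt \<in> W \<and> l \<in> limiting_normal_cone T (A wt + H)
      \<and> norm l \<le> 2 * (norm a + 10) * (\<kappa> + 1)
      \<and> (\<forall>u. \<bar>a u + l \<bullet> A u\<bar> \<le> (2 * inverse (real (Suc k))) * norm u)
      \<and> a wt + h < \<alpha> + inverse (real (Suc k)) \<and> \<bar>a wt + l \<bullet> A wt\<bar> \<le> 4 * inverse (real (Suc k))"]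
    by blast
  have "\<alpha> \<le> a (WW k) + h \<and> a (WW k) + h < \<alpha> + inverse (real (Suc k))" for k
    using P[of k] \<alpha>le by blast
  from limit_of_near_optimal_multipliers[of LL _ a A, OF _ _ this] P
  obtain \<phi> lam where \<phi>: "strict_mono \<phi>" and Llim: "(\<lambda>k. LL (\<phi> k)) \<longlonglongrightarrow> lam"
    and lamstat: "\<forall>u. a u + lam \<bullet> A u = 0" and vlim: "(\<lambda>k. a (WW (\<phi> k)) + h) \<longlonglongrightarrow> \<alpha>"
    and clim: "(\<lambda>k. LL (\<phi> k) \<bullet> A (WW (\<phi> k)) + a (WW (\<phi> k))) \<longlonglongrightarrow> 0"
    by blast
  have lamdir: "lam \<in> directional_normal_cone K (g xbar) (g' xbar d)"
  proof (rule directional_normal_cone_LIMSEQ[OF _ Llim], intro allI)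
    fix k show "LL (\<phi> k) \<in> directional_normal_cone K (g xbar) (g' xbar d)"
      using limiting_normal_second_order_tangent_directional[OF K_closed] P unfolding T_def by blast
  qed
  have lamM: "lam \<in> M_multipliers (f' xbar) (g' xbar) K (g xbar) d"
    unfolding M_multipliers_def using lamdir lamstat unfolding a_def A_def by blast
  have "support_fun ((\<lambda>w. g' xbar w + g'' xbar d d) ` second_order_tangent_set (g -` K) xbar d) lam
      \<le> ereal (f'' xbar d d + lam \<bullet> g'' xbar d d)"
    unfolding support_fun_def second_order_tangent_set_eq
  proof (rule SUP_least)
    fix u assume "u \<in> (\<lambda>w. g' xbar w + g'' xbar d d) ` second_order_tangent 1 (g -` K) xbar d"
    then obtain w where w: "w \<in> W" "u = A w + H" unfolding W_def A_def H_def by blast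
    have "lam \<bullet> u = - a w + lam \<bullet> H" using lamstat w(2) by (simp add: inner_add_right) (metis add_eq_0_iff)
    then have "lam \<bullet> u \<le> h + lam \<bullet> H" using optW[OF w(1)] by linarith
    then show "ereal (lam \<bullet> u) \<le> ereal (f'' xbar d d + lam \<bullet> g'' xbar d d)"
      unfolding h_def H_def by simp
  qed
  then have gap: "ereal (f'' xbar d d + lam \<bullet> g'' xbar d d)
      - support_fun ((\<lambda>w. g' xbar w + g'' xbar d d) ` second_order_tangent_set (g -` K) xbar d) lam \<ge> 0"
    by (cases "support_fun ((\<lambda>w. g' xbar w + g'' xbar d d) ` second_order_tangent_set (g -` K) xbar d) lam") auto
  have value_lim: "(\<lambda>k. ereal (f' xbar (WW (\<phi> k)) + f'' xbar d d))
      \<longlonglongrightarrow> (INF v\<in>second_order_tangent_set (g -` K) xbar d. ereal (f' xbar v + f'' xbar d d))"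
    using tendsto_ereal[OF vlim] unfolding \<alpha>[symmetric] I_def W_def second_order_tangent_set_eq a_def h_def .
  have tangents: "\<forall>k. WW (\<phi> k) \<in> second_order_tangent_set (g -` K) xbar d"
    using P unfolding W_def second_order_tangent_set_eq by blast
  have normals: "\<forall>k. LL (\<phi> k) \<in> limiting_normal_cone (second_order_tangent_set K (g xbar) (g' xbar d))
      (g' xbar (WW (\<phi> k)) + g'' xbar d d)"
    using P unfolding T_def second_order_tangent_set_eq H_def A_def by blast
  show ?thesis
    using lamM gap tangents normals value_lim clim Llim unfolding a_def A_def
    by (intro bexI[of _ lam] conjI exI[of _ "\<lambda>k. WW (\<phi> k)"] exI[of _ "\<lambda>k. LL (\<phi> k)"]) auto
qed

theorem theorem4p4:
  fixes f :: "'a::euclidean_space \<Rightarrow> real" and g :: "'a \<Rightarrow> 'b::euclidean_space"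
    and f' :: "'a \<Rightarrow> 'a \<Rightarrow>\<^sub>L real" and f'' :: "'a \<Rightarrow> 'a \<Rightarrow>\<^sub>L ('a \<Rightarrow>\<^sub>L real)"
    and g' :: "'a \<Rightarrow> 'a \<Rightarrow>\<^sub>L 'b" and g'' :: "'a \<Rightarrow> 'a \<Rightarrow>\<^sub>L ('a \<Rightarrow>\<^sub>L 'b)"
    and K :: "'b set" and xbar d :: 'a
  assumes f1: "\<And>x. (f has_derivative blinfun_apply (f' x)) (at x)"
    and f2: "\<And>x. (f' has_derivative blinfun_apply (f'' x)) (at x)"
    and f2c: "continuous_on UNIV f''"
    and g1: "\<And>x. (g has_derivative blinfun_apply (g' x)) (at x)"
    and g2: "\<And>x. (g' has_derivative blinfun_apply (g'' x)) (at x)"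
    and g2c: "continuous_on UNIV g''"
    and K_closed: "closed K"
    and d_tan: "d \<in> tangent_cone (g -` K) xbar"
    and opt: "local_opt_dir f (g -` K) xbar d"
    and crit: "f' xbar d = 0"
    and mscq: "MSCQ_dir g K xbar d"
  shows
    "(\<exists>l \<in> M_multipliers (f' xbar) (g' xbar) K (g xbar) d.
        support_fun (blinfun_apply (g' xbar) ` asymptotic_second_order_tangent_cone (g -` K) xbar d) l \<le> 0
      \<and> l \<in> limiting_normal_cone
             (asymptotic_second_order_tangent_cone K (g xbar) (g' xbar d)) 0)
   \<and> (second_order_tangent_set K (g xbar) (g' xbar d) \<noteq> {} \<longrightarrow>
      (\<exists>l \<in> M_multipliers (f' xbar) (g' xbar) K (g xbar) d.
        ereal (f'' xbar d d + l \<bullet> g'' xbar d d)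
          - support_fun ((\<lambda>w. g' xbar w + g'' xbar d d) ` second_order_tangent_set (g -` K) xbar d) l \<ge> 0
      \<and> (\<exists>w :: nat \<Rightarrow> 'a. \<exists>ls :: nat \<Rightarrow> 'b.
           (\<forall>k. w k \<in> second_order_tangent_set (g -` K) xbar d)
         \<and> (\<forall>k. ls k \<in> limiting_normal_cone (second_order_tangent_set K (g xbar) (g' xbar d))
                          (g' xbar (w k) + g'' xbar d d))
         \<and> (\<lambda>k. ereal (f' xbar (w k) + f'' xbar d d))
             \<longlonglongrightarrow> (INF v\<in>second_order_tangent_set (g -` K) xbar d. ereal (f' xbar v + f'' xbar d d))
         \<and> (\<lambda>k. ls k \<bullet> g' xbar (w k) + f' xbar (w k)) \<longlonglongrightarrow> 0
         \<and> ls \<longlonglongrightarrow> l)))"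
  using asymptotic_multiplier_exists[where f=f and f'=f' and f''=f'' and g=g and g'=g' and g''=g'' and xbar=xbar,
      OF f1 f2[of xbar] g1 g2[of xbar] K_closed d_tan opt crit mscq]
    second_order_multiplier_exists[where f=f and f'=f' and f''=f'' and g=g and g'=g' and g''=g'' and xbar=xbar,
      OF f1 f2[of xbar] g1 g2[of xbar] K_closed opt crit mscq]
  by (intro conjI impI) auto

end
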